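(* For a bounded CAD geometry $\Omega \subset \mathbb{R}^d$ with a smoothly twice-differentiable boundary $\partial \Omega$, and a sufficiently refined background mesh, the volume insertion error is bounded by $|V_{\textup{exact}} - V_h| \leq C h^{2}$, where $V_h$ and $V_{\textup{exact}}$ are the approximate and exact volumes, respectively, $C$ is a constant, and $h$ is the background element size.
   Context: The geometry $\Omega$ is covered by a mesh $\mathcal{T} = \cup_e \overline{K^e}$ of hexahedral elements $\{K^e\}_{e=1}^{n_{\text{el}}}$ of size $h$. The approximate volume $V_h$ is produced by a volume fraction insertion procedure: in each element (or subhexahedron at the finest adaptive subdivision) intersecting $\partial\Omega$, the geometry is approximated by a plane through the point $\boldsymbol{x}_p \in \partial\Omega$ closest to the element's mean-coordinate centroid $\boldsymbol{x}_c$, with normal parallel to $\boldsymbol{x}_c - \boldsymbol{x}_p$ and oriented outward from $\Omega$ (determined via an inside/outside query); the volume of the element cut by this plane on the inside gives the element's contribution, while elements entirely inside or outside $\Omega$ contribute their full volume or zero. Equivalently, with $f(\boldsymbol{x},\Omega)$ the signed distance to $\partial\Omega$ (negative inside $\Omega$), $\Phi$ the step function ($\Phi(x)=1$ for $x\le 0$, $0$ otherwise), and $g^e(\boldsymbol{x}) = f(\boldsymbol{x}_p,\Omega) + (\boldsymbol{x}-\boldsymbol{x}_p)\cdot\nabla_{\boldsymbol{x}} f(\boldsymbol{x}_p,\Omega)$ the local linear approximation of $f$ on $K^e$, one has $V_{\text{exact}} = \sum_{K^e} \int_{K^e} \Phi(f(\boldsymbol{x},\Omega))\,\mathrm{d}\boldsymbol{x}$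 and $V_h = \sum_{K^e} \int_{K^e} \Phi(g^e(\boldsymbol{x}))\,\mathrm{d}\boldsymbol{x}$. *)

theory Defs
  imports "HOL-Analysis.Analysis"
begin

definition signed_dist :: "'a::euclidean_space set \<Rightarrow> 'a \<Rightarrow> real" where
  "signed_dist \<Omega> x =
     (if x \<in> \<Omega> then - infdist x (frontier \<Omega>) else infdist x (frontier \<Omega>))"

definition grad_at :: "('a::euclidean_space \<Rightarrow> real) \<Rightarrow> 'a \<Rightarrow> 'a" where
  "grad_at f x = (SOME v. (f has_derivative (\<lambda>y. v \<bullet> y)) (at x))"

definition C2_boundary :: "'a::euclidean_space set \<Rightarrow> bool" where
  "C2_boundary \<Omega> \<longleftrightarrow>
     (\<forall>p\<in>frontier \<Omega>. \<exists>U (\<phi>::'a \<Rightarrow> real) (D1::'a \<Rightarrow> 'a) (D2::'a \<Rightarrow> 'a \<Rightarrow>\<^sub>L 'a).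
        open U \<and> p \<in> U \<and> \<Omega> \<inter> U = {x\<in>U. \<phi> x < 0} \<and>
        (\<forall>x\<in>U. (\<phi> has_derivative (\<lambda>v. D1 x \<bullet> v)) (at x)) \<and>
        (\<forall>x\<in>U. (D1 has_derivative blinfun_apply (D2 x)) (at x)) \<and>
        continuous_on U D2 \<and>
        (\<forall>x\<in>U. D1 x \<noteq> 0))"

definition int_pts :: "'a::euclidean_space set" where
  "int_pts = {k. \<forall>i\<in>Basis. k \<bullet> i \<in> \<int>}"

definition grid_cell :: "real \<Rightarrow> 'a::euclidean_space \<Rightarrow> 'a set" where
  "grid_cell h k = cbox (h *\<^sub>R k) (h *\<^sub>R (k + One))"

definition cell_centroid :: "real \<Rightarrow> 'a::euclidean_space \<Rightarrow> 'a" where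
  "cell_centroid h k = h *\<^sub>R (k + (1/2) *\<^sub>R One)"

text \<open>Contribution of one element; cp selects a closest boundary point.\<close>
definition elem_vol :: "'a::euclidean_space set \<Rightarrow> real \<Rightarrow> ('a \<Rightarrow> 'a) \<Rightarrow> 'a \<Rightarrow> real" where
  "elem_vol \<Omega> h cp k =
     (let K = grid_cell h k; xp = cp (cell_centroid h k) in
      if K \<inter> frontier \<Omega> \<noteq> {} then
        measure lebesgue {x\<in>K. signed_dist \<Omega> xp
                + (x - xp) \<bullet> grad_at (signed_dist \<Omega>) xp \<le> 0}
      else if K \<subseteq> \<Omega> then measure lebesgue K
      else 0)"

definition V_h :: "'a::euclidean_space set \<Rightarrow> real \<Rightarrow> ('a \<Rightarrow> 'a) \<Rightarrow> real" where
  "V_h \<Omega> h cp = (\<Sum>k\<in>{k\<in>int_pts. grid_cell h k \<inter> closure \<Omega> \<noteq> {}}. elem_vol \<Omega> h cp k)"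

definition V_exact :: "'a::euclidean_space set \<Rightarrow> real" where
  "V_exact \<Omega> = measure lebesgue {x. signed_dist \<Omega> x \<le> 0}"

end

theory Submission
  imports Defs
begin

text \<open>
  A bounded domain with \<open>C\<^sup>2\<close> boundary has touching interior and exterior balls of one radius
  \<open>r\<close> at every boundary point (a second-order Taylor bound for a local defining function, plus
  compactness of the boundary). Squeezed between these balls, the signed distance satisfies
  \<open>|f(x) - (x - p) \<bullet> n| \<le> |x - p|\<^sup>2 / r\<close> at a boundary point \<open>p\<close> with outer normal \<open>n\<close>. So \<open>f\<close> is
  differentiable at \<open>p\<close> with gradient \<open>n\<close>, and on an element of size \<open>h\<close> meeting the boundary
  the plane \<open>g\<^sup>e\<close> differs from \<open>f\<close> by at most \<open>\<eta> = (2 d h)\<^sup>2 / r\<close>. Hence the error of such an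
  element is bounded by the measure of its part of the tube \<open>{x. dist(x, \<partial>\<Omega>) \<le> \<eta>}\<close>, while
  elements not meeting the boundary are exact. Summing, the total error is at most the measure
  of the tube, which is \<open>O(\<eta>) = O(h\<^sup>2)\<close>: locally the tube lies in a thin band around a level set
  of a function with a partial derivative bounded away from zero, and counting grid cells
  column by column bounds its measure linearly in the width.
\<close>

section \<open>Signed distance between touching balls\<close>

lemma infdist_frontier_le_dist:
  fixes x z :: "'a::euclidean_space"
  assumes "x \<in> S \<longleftrightarrow> z \<notin> S"
  shows "infdist x (frontier S) \<le> dist x z"
proof -
  have "closed_segment x z \<inter> frontier S \<noteq> {}"
    by (rule connected_Int_frontier) (use assms in \<open>auto intro: connected_segment\<close>)
  then obtain y where y: "y \<in> closed_segment x z" "y \<in> frontier S" by blast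
  moreover have "dist x y \<le> dist x z"
    using dist_in_closed_segment[OF y(1)] by (simp add: dist_commute)
  ultimately show ?thesis using infdist_le2 by blast
qed

lemma infdist_frontier_le_dist_ball:
  fixes x c :: "'a::euclidean_space"
  assumes "0 < r" "r \<le> dist x c" "\<And>z. z \<in> ball c r \<Longrightarrow> x \<in> S \<longleftrightarrow> z \<notin> S"
  shows "infdist x (frontier S) \<le> dist x c - r"
proof -
  define z where "z = c + (r / dist x c) *\<^sub>R (x - c)"
  have "x - z = (1 - r / dist x c) *\<^sub>R (x - c)"
    by (simp add: z_def algebra_simps)
  moreover have "0 \<le> 1 - r / dist x c"
    using assms(1,2) by (simp add: divide_le_eq_1)
  ultimately have "dist x z = (1 - r / dist x c) * dist x c"
    by (simp add: dist_norm)
  also have "\<dots> = dist x c - r"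
    using assms(1,2) by (auto simp: field_simps)
  finally have dist_z: "dist x z = dist x c - r" .
  have "z \<in> closure (ball c r)"
    using assms(1,2) by (simp add: z_def dist_norm)
  then have "infdist x (frontier S) \<le> dist x z"
    by (rule continuous_ge_on_closure[where f="dist x", rotated])
       (use assms(3) infdist_frontier_le_dist in \<open>auto intro: continuous_intros\<close>)
  then show ?thesis
    using dist_z by simp
qed

lemma norm_diff_scaleR_unit_square:
  fixes u n :: "'a::real_inner"
  assumes "norm n = 1"
  shows "norm (u - c *\<^sub>R n)^2 = norm u ^ 2 - 2 * c * (u \<bullet> n) + c^2"
proof -
  have "norm (u - c *\<^sub>R n)^2 = (u - c *\<^sub>R n) \<bullet> (u - c *\<^sub>R n)"
    by (simp only: power2_norm_eq_inner)
  also have "\<dots> = u \<bullet> u - 2 * c * (u \<bullet> n) + c^2 * (n \<bullet> n)"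
    by (simp add: inner_diff_left inner_diff_right inner_commute[of n u] power2_eq_square
        algebra_simps)
  finally show ?thesis
    using assms by (simp add: power2_norm_eq_inner norm_eq_1)
qed

definition touching_balls :: "'a::euclidean_space set \<Rightarrow> real \<Rightarrow> 'a \<Rightarrow> 'a \<Rightarrow> bool" where
  "touching_balls S r q n \<longleftrightarrow>
     norm n = 1 \<and> ball (q + r *\<^sub>R n) r \<inter> S = {} \<and> ball (q - r *\<^sub>R n) r \<subseteq> S"

lemma infdist_ge_dist_ball:
  fixes x c :: "'a::euclidean_space"
  assumes "A \<noteq> {}" "ball c r \<inter> A = {}"
  shows "r - dist x c \<le> infdist x A"
proof -
  have "r - dist x c \<le> dist x a" if "a \<in> A" for a
    using that assms(2) dist_triangle[of a c x] by (force simp: dist_commute)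
  then show ?thesis
    using assms(1) by (simp add: infdist_notempty cINF_greatest)
qed

lemma signed_dist_ge_exterior_ball:
  fixes c :: "'a::euclidean_space"
  assumes "frontier S \<noteq> {}" "0 < r" "ball c r \<inter> S = {}"
  shows "r - dist x c \<le> signed_dist S x"
proof (cases "x \<in> S")
  case True
  then have "r \<le> dist x c"
    using assms(3) by (force simp: dist_commute)
  with assms True have "infdist x (frontier S) \<le> dist x c - r"
    by (intro infdist_frontier_le_dist_ball) auto
  then show ?thesis
    using True by (simp add: signed_dist_def)
next
  case False
  have "ball c r \<inter> closure S = {}"
    using assms(3) by (simp add: open_Int_closure_eq_empty)
  then have "ball c r \<inter> frontier S = {}"
    by (auto simp: frontier_def)
  then have "r - dist x c \<le> infdist x (frontier S)"
    by (rule infdist_ge_dist_ball[OF assms(1)])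
  then show ?thesis
    using False by (simp add: signed_dist_def)
qed

lemma signed_dist_le_interior_ball:
  fixes c :: "'a::euclidean_space"
  assumes "frontier S \<noteq> {}" "0 < r" "ball c r \<subseteq> S"
  shows "signed_dist S x \<le> dist x c - r"
proof (cases "x \<in> S")
  case False
  then have "r \<le> dist x c"
    using assms(3) by (force simp: dist_commute)
  with assms False have "infdist x (frontier S) \<le> dist x c - r"
    by (intro infdist_frontier_le_dist_ball) auto
  then show ?thesis
    using False by (simp add: signed_dist_def)
next
  case True
  have "ball c r \<subseteq> interior S"
    using assms(3) by (simp add: interior_maximal)
  then have "ball c r \<inter> frontier S = {}"
    by (auto simp: frontier_def)
  then have "r - dist x c \<le> infdist x (frontier S)"
    by (rule infdist_ge_dist_ball[OF assms(1)])
  then show ?thesis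
    using True by (simp add: signed_dist_def)
qed

text \<open>The signed distance is squeezed between the distances to the two touching balls.\<close>

lemma signed_dist_tangent_plane:
  fixes p x :: "'a::euclidean_space"
  assumes balls: "touching_balls S r p n" and "p \<in> frontier S" "0 < r" "norm (x - p) \<le> r"
  shows "\<bar>signed_dist S x - (x - p) \<bullet> n\<bar> \<le> norm (x - p)^2 / r"
proof -
  define u where "u = x - p"
  define a where "a = u \<bullet> n"
  define t where "t = norm u ^ 2 / r"
  have n: "norm n = 1" "norm (-n) = 1"
    using balls by (auto simp: touching_balls_def)
  have bounds: "\<bar>a\<bar> \<le> norm u" "norm u \<le> r" "0 \<le> t"
    using Cauchy_Schwarz_ineq2[of u n] n assms(3,4) by (simp_all add: a_def u_def t_def)
  have rt: "r * t = norm u ^ 2"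
    using assms(3) by (simp add: t_def)
  have "norm (u - r *\<^sub>R n) \<le> r - a + t"
  proof (rule power2_le_imp_le)
    have "(r - a + t)^2 = norm (u - r *\<^sub>R n)^2 + ((a - t)^2 + norm u ^ 2)"
      using norm_diff_scaleR_unit_square[OF n(1), of u r] rt
      by (simp add: a_def power2_eq_square algebra_simps)
    then show "norm (u - r *\<^sub>R n)^2 \<le> (r - a + t)^2"
      by simp
  qed (use bounds in linarith)
  moreover have "norm (u + r *\<^sub>R n) \<le> r + a + t"
  proof (rule power2_le_imp_le)
    have "(r + a + t)^2 = norm (u + r *\<^sub>R n)^2 + ((a + t)^2 + norm u ^ 2)"
      using norm_diff_scaleR_unit_square[OF n(2), of u r] rt
      by (simp add: a_def power2_eq_square algebra_simps)
    then show "norm (u + r *\<^sub>R n)^2 \<le> (r + a + t)^2"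
      by simp
  qed (use bounds in linarith)
  moreover have "r - dist x (p + r *\<^sub>R n) \<le> signed_dist S x"
    using balls assms(2,3) by (intro signed_dist_ge_exterior_ball) (auto simp: touching_balls_def)
  moreover have "signed_dist S x \<le> dist x (p - r *\<^sub>R n) - r"
    using balls assms(2,3) by (intro signed_dist_le_interior_ball) (auto simp: touching_balls_def)
  moreover have "dist x (p + r *\<^sub>R n) = norm (u - r *\<^sub>R n)" "dist x (p - r *\<^sub>R n) = norm (u + r *\<^sub>R n)"
    by (simp_all add: dist_norm u_def algebra_simps)
  ultimately have "\<bar>signed_dist S x - a\<bar> \<le> t"
    by linarith
  then show ?thesis
    by (simp add: a_def t_def u_def)
qed

lemma signed_dist_touching_balls:
  fixes p :: "'a::euclidean_space"
  assumes balls: "touching_balls S r p n" and "p \<in> frontier S" "0 < r"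
  shows "signed_dist S p = 0"
    and "(signed_dist S has_derivative (\<lambda>v. n \<bullet> v)) (at p)"
    and "grad_at (signed_dist S) p = n"
proof -
  note tangent = signed_dist_tangent_plane[OF assms]
  show p: "signed_dist S p = 0"
    using tangent[of p] assms(3) by simp
  show deriv: "(signed_dist S has_derivative (\<lambda>v. n \<bullet> v)) (at p)"
    unfolding has_derivative_at_alt
  proof (intro conjI allI impI bounded_linear_inner_right)
    fix e :: real assume "0 < e"
    have "\<bar>signed_dist S y - signed_dist S p - n \<bullet> (y - p)\<bar> \<le> e * norm (y - p)"
      if y: "norm (y - p) < min r (e * r)" for y
    proof -
      have "\<bar>signed_dist S y - signed_dist S p - n \<bullet> (y - p)\<bar> \<le> norm (y - p) * (norm (y - p) / r)"
        using tangent[of y] y p by (simp add: inner_commute power2_eq_square)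
      also have "\<dots> \<le> norm (y - p) * e"
        using y assms(3) by (intro mult_left_mono) (auto simp: field_simps)
      finally show ?thesis
        by (simp add: mult.commute)
    qed
    then show "\<exists>d>0. \<forall>y. norm (y - p) < d \<longrightarrow>
        norm (signed_dist S y - signed_dist S p - n \<bullet> (y - p)) \<le> e * norm (y - p)"
      using \<open>0 < e\<close> assms(3) by (intro exI[of _ "min r (e * r)"]) auto
  qed
  show "grad_at (signed_dist S) p = n"
    unfolding grad_at_def
  proof (rule some_equality)
    fix v assume "(signed_dist S has_derivative (\<lambda>y. v \<bullet> y)) (at p)"
    then have "(\<lambda>y. v \<bullet> y) = (\<lambda>y. n \<bullet> y)"
      using deriv has_derivative_unique by blast
    then have "(v - n) \<bullet> (v - n) = 0"
      by (metis inner_diff_left inner_commute diff_self)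
    then show "v = n" by simp
  qed (rule deriv)
qed

section \<open>Uniform touching balls at a \<open>C\<^sup>2\<close> boundary\<close>

lemma C2_boundaryE:
  fixes \<Omega> :: "'a::euclidean_space set"
  assumes "C2_boundary \<Omega>" "p \<in> frontier \<Omega>"
  obtains U \<phi> D1 D2 where "open U" "p \<in> U" "\<Omega> \<inter> U = {x\<in>U. \<phi> x < 0}"
    "\<And>x. x \<in> U \<Longrightarrow> (\<phi> has_derivative (\<lambda>v. D1 x \<bullet> v)) (at x)"
    "\<And>x. x \<in> U \<Longrightarrow> (D1 has_derivative blinfun_apply (D2 x)) (at x)"
    "continuous_on U D2" "\<And>x. x \<in> U \<Longrightarrow> D1 x \<noteq> 0"
proof -
  have "\<exists>U \<phi> D1 D2. open U \<and> p \<in> U \<and> \<Omega> \<inter> U = {x\<in>U. \<phi> x < 0} \<and>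
      (\<forall>x\<in>U. (\<phi> has_derivative (\<lambda>v. D1 x \<bullet> v)) (at x)) \<and>
      (\<forall>x\<in>U. (D1 has_derivative blinfun_apply (D2 x)) (at x)) \<and>
      continuous_on U D2 \<and> (\<forall>x\<in>U. D1 x \<noteq> 0)"
    using assms(1) unfolding C2_boundary_def using assms(2) by (rule bspec)
  then show ?thesis
    by (elim exE conjE) (rule that, auto)
qed

lemma chart_sublevel_open:
  fixes \<phi> :: "'a::topological_space \<Rightarrow> real"
  assumes "open U" "continuous_on U \<phi>"
  shows "open {x\<in>U. \<phi> x < c}" "open {x\<in>U. c < \<phi> x}"
  using continuous_open_preimage[OF assms(2,1), of "{..<c}"]
    continuous_open_preimage[OF assms(2,1), of "{c<..}"]
  by (auto simp: vimage_def Int_def open_lessThan open_greaterThan)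

lemma C2_boundary_imp_open:
  fixes \<Omega> :: "'a::euclidean_space set"
  assumes "C2_boundary \<Omega>"
  shows "open \<Omega>"
proof -
  have "p \<in> interior \<Omega>" if p: "p \<in> \<Omega>" "p \<in> frontier \<Omega>" for p
  proof -
    obtain U \<phi> D1 where U: "open U" "p \<in> U" "\<Omega> \<inter> U = {x\<in>U. \<phi> x < 0}"
      and d: "\<And>x. x \<in> U \<Longrightarrow> (\<phi> has_derivative (\<lambda>v. D1 x \<bullet> v)) (at x)"
      using C2_boundaryE[OF assms p(2)] by metis
    have "continuous_on U \<phi>"
      using d by (meson has_derivative_continuous continuous_at_imp_continuous_on)
    then have "open {x\<in>U. \<phi> x < 0}"
      using U(1) by (rule chart_sublevel_open(1)[rotated])
    moreover have "p \<in> {x\<in>U. \<phi> x < 0}" "{x\<in>U. \<phi> x < 0} \<subseteq> \<Omega>"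
      using U p(1) by blast+
    ultimately show ?thesis
      by (meson interiorI)
  qed
  then have "\<Omega> \<subseteq> interior \<Omega>"
    using closure_subset by (auto simp: frontier_def)
  then show ?thesis
    by (metis interior_subset open_interior subset_antisym)
qed

lemma chart_vanishes_on_frontier:
  fixes \<phi> :: "'a::euclidean_space \<Rightarrow> real"
  assumes "open \<Omega>" "open U" "\<Omega> \<inter> U = {x\<in>U. \<phi> x < 0}" "continuous_on U \<phi>"
    and "q \<in> frontier \<Omega>" "q \<in> U"
  shows "\<phi> q = 0"
proof -
  have "q \<notin> \<Omega>"
    using assms(1,5) by (simp add: frontier_def interior_open)
  then have "q \<notin> {x\<in>U. \<phi> x < 0}"
    by (simp add: assms(3)[symmetric])
  then have "0 \<le> \<phi> q"
    using assms(6) by simp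
  moreover have "\<not> 0 < \<phi> q"
  proof
    assume "0 < \<phi> q"
    moreover have "{x\<in>U. 0 < \<phi> x} \<inter> \<Omega> = {}"
    proof -
      have "{x\<in>U. 0 < \<phi> x} \<inter> \<Omega> = {x\<in>U. 0 < \<phi> x} \<inter> (\<Omega> \<inter> U)"
        by blast
      then show ?thesis
        by (auto simp: assms(3))
    qed
    moreover have "q \<in> closure \<Omega>"
      using assms(5) by (simp add: frontier_def)
    ultimately show False
      using chart_sublevel_open(2)[OF assms(2,4)] open_Int_closure_eq_empty assms(6) by blast
  qed
  ultimately show ?thesis by simp
qed

lemma lipschitz_from_gradient_bound:
  fixes \<phi> :: "'a::euclidean_space \<Rightarrow> real"
  assumes "convex S" "\<And>z. z \<in> S \<Longrightarrow> (\<phi> has_derivative (\<lambda>v. D z \<bullet> v)) (at z)"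
    and "\<And>z. z \<in> S \<Longrightarrow> norm (D z) \<le> L" "x \<in> S" "y \<in> S"
  shows "\<bar>\<phi> x - \<phi> y\<bar> \<le> L * norm (x - y)"
proof -
  have "norm (\<phi> x - \<phi> y) \<le> L * norm (x - y)"
  proof (rule differentiable_bound[OF assms(1) _ _ assms(4,5)])
    show "(\<phi> has_derivative (\<lambda>v. D z \<bullet> v)) (at z within S)" if "z \<in> S" for z
      using assms(2)[OF that] by (rule has_derivative_at_withinI)
    show "onorm (\<lambda>v. D z \<bullet> v) \<le> L" if "z \<in> S" for z
    proof (rule onorm_le)
      fix v
      have "norm (D z \<bullet> v) \<le> norm (D z) * norm v"
        using Cauchy_Schwarz_ineq2 by simp
      also have "\<dots> \<le> L * norm v"
        using assms(3)[OF that] by (simp add: mult_right_mono)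
      finally show "norm (D z \<bullet> v) \<le> L * norm v" .
    qed
  qed
  then show ?thesis by simp
qed

lemma taylor_second_order_bound:
  fixes \<phi> :: "'a::euclidean_space \<Rightarrow> real"
  assumes S: "convex S"
    and d1: "\<And>x. x \<in> S \<Longrightarrow> (\<phi> has_derivative (\<lambda>v. D1 x \<bullet> v)) (at x)"
    and d2: "\<And>x. x \<in> S \<Longrightarrow> (D1 has_derivative blinfun_apply (D2 x)) (at x)"
    and M: "\<And>x. x \<in> S \<Longrightarrow> norm (D2 x) \<le> M" and "x \<in> S" "q \<in> S"
  shows "\<bar>\<phi> x - \<phi> q - D1 q \<bullet> (x - q)\<bar> \<le> M * norm (x - q)^2"
proof -
  have D1_lipschitz: "norm (D1 z - D1 q) \<le> M * norm (z - q)" if "z \<in> S" for z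
  proof (rule differentiable_bound[OF S _ _ that \<open>q \<in> S\<close>])
    show "(D1 has_derivative blinfun_apply (D2 y)) (at y within S)" if "y \<in> S" for y
      using d2[OF that] by (rule has_derivative_at_withinI)
    show "onorm (blinfun_apply (D2 y)) \<le> M" if "y \<in> S" for y
      using M[OF that] by (simp add: norm_blinfun.rep_eq)
  qed
  have segment: "closed_segment q x \<subseteq> S"
    using closed_segment_subset[OF \<open>q \<in> S\<close> \<open>x \<in> S\<close> S] .
  have "\<bar>(\<phi> x - D1 q \<bullet> x) - (\<phi> q - D1 q \<bullet> q)\<bar> \<le> (M * norm (x - q)) * norm (x - q)"
  proof (rule lipschitz_from_gradient_bound[OF convex_closed_segment])
    fix z assume z: "z \<in> closed_segment q x"
    then show "((\<lambda>y. \<phi> y - D1 q \<bullet> y) has_derivative (\<lambda>v. (D1 z - D1 q) \<bullet> v)) (at z)"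
      using segment d1 by (auto intro!: derivative_eq_intros simp: inner_diff_left)
    have "norm (z - q) \<le> norm (x - q)"
      using dist_in_closed_segment[OF z] by (simp add: dist_norm norm_minus_commute)
    then show "norm (D1 z - D1 q) \<le> M * norm (x - q)"
      using D1_lipschitz[of z] segment z M[of z] norm_ge_zero[of "D2 z"]
      by (meson mult_left_mono order_trans subsetD)
  qed auto
  then show ?thesis
    by (simp add: inner_diff_right power2_eq_square mult.assoc algebra_simps)
qed

lemma ball_touching_subset:
  fixes q n :: "'a::real_normed_vector"
  assumes "norm n = 1"
  shows "ball (q + r *\<^sub>R n) r \<subseteq> ball q (2 * r)"
proof
  fix x assume "x \<in> ball (q + r *\<^sub>R n) r"
  then have "dist q x < r + \<bar>r\<bar>"
    using dist_triangle[of q x "q + r *\<^sub>R n"] assms by (simp add: dist_norm)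
  moreover have "0 < r"
    using \<open>x \<in> ball (q + r *\<^sub>R n) r\<close> by (metis dist_not_less_zero less_le_trans mem_ball not_le)
  ultimately show "x \<in> ball q (2 * r)" by simp
qed

text \<open>On the ball touching the zero level set at \<open>q\<close> from the side of the gradient \<open>g\<close>,
  the linear Taylor term dominates the quadratic remainder.\<close>

lemma positive_on_ball_along_gradient:
  fixes \<phi> :: "'a::euclidean_space \<Rightarrow> real"
  assumes "0 < r" "0 \<le> M" "2 * M * r < norm g"
    and lower: "\<And>y. y \<in> ball q (2 * r) \<Longrightarrow> g \<bullet> (y - q) - M * norm (y - q)^2 \<le> \<phi> y"
    and x: "x \<in> ball (q + r *\<^sub>R sgn g) r"
  shows "0 < \<phi> x"
proof -
  define u where "u = x - q"
  define a where "a = u \<bullet> sgn g"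
  have "0 \<le> 2 * M * r"
    using assms(1,2) by simp
  then have "g \<noteq> 0"
    using assms(3) by auto
  then have g: "norm (sgn g) = 1"
    by (simp add: norm_sgn)
  have "norm (u - r *\<^sub>R sgn g) < r"
    using x by (simp add: dist_norm u_def norm_minus_commute algebra_simps)
  then have "norm (u - r *\<^sub>R sgn g)^2 < r^2"
    by (simp add: power_strict_mono)
  then have u_sq: "norm u ^ 2 < 2 * r * a"
    using norm_diff_scaleR_unit_square[OF g, of u r] by (simp add: a_def)
  then have "0 < r * a"
    using zero_le_power2[of "norm u"] by linarith
  then have "0 < a"
    using assms(1) by (simp add: zero_less_mult_iff)
  have "g \<bullet> u = norm g * a"
    using \<open>g \<noteq> 0\<close> by (simp add: a_def sgn_div_norm inner_commute[of g])
  moreover have "x \<in> ball q (2 * r)"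
    using ball_touching_subset[OF g, of q r] x by blast
  ultimately have "norm g * a - M * norm u ^ 2 \<le> \<phi> x"
    using lower[of x] by (simp add: u_def)
  moreover have "M * norm u ^ 2 \<le> M * (2 * r * a)"
    using u_sq assms(2) by (simp add: mult_left_mono)
  moreover have "0 < (norm g - 2 * M * r) * a"
    using assms(3) \<open>0 < a\<close> by simp
  ultimately show ?thesis
    by (simp add: algebra_simps)
qed

lemma sublevel_touching_balls:
  fixes \<phi> :: "'a::euclidean_space \<Rightarrow> real"
  assumes "0 < r" "0 \<le> M" "2 * M * r < norm g"
    and U: "ball q (2 * r) \<subseteq> U" "\<Omega> \<inter> U = {x\<in>U. \<phi> x < 0}"
    and taylor: "\<And>y. y \<in> ball q (2 * r) \<Longrightarrow> \<bar>\<phi> y - g \<bullet> (y - q)\<bar> \<le> M * norm (y - q)^2"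
  shows "touching_balls \<Omega> r q (sgn g)"
proof -
  have "0 \<le> 2 * M * r"
    using assms(1,2) by simp
  then have "g \<noteq> 0"
    using assms(3) by auto
  then have n: "norm (sgn g) = 1"
    by (simp add: norm_sgn)
  have inU: "ball (q + r *\<^sub>R sgn g) r \<subseteq> U" "ball (q - r *\<^sub>R sgn g) r \<subseteq> U"
    using ball_touching_subset[of "sgn g" q r] ball_touching_subset[of "- sgn g" q r] n U(1)
    by auto
  have "x \<notin> \<Omega>" if x: "x \<in> ball (q + r *\<^sub>R sgn g) r" for x
  proof -
    have "0 < \<phi> x"
      using x taylor by (intro positive_on_ball_along_gradient[OF assms(1-3)]) force
    then show ?thesis
      using x inU(1) U(2) by (metis (mono_tags, lifting) IntI mem_Collect_eq not_less_iff_gr_or_eq subsetD)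
  qed
  moreover have "x \<in> \<Omega>" if x: "x \<in> ball (q - r *\<^sub>R sgn g) r" for x
  proof -
    have "0 < - \<phi> x"
      using x taylor assms(3) by (intro positive_on_ball_along_gradient[OF assms(1,2),
          where \<phi>="\<lambda>y. - \<phi> y" and g="- g" and q=q]) (force simp: sgn_minus)+
    then show ?thesis
      using x inU(2) U(2) by (metis (mono_tags, lifting) IntE mem_Collect_eq neg_0_less_iff_less subsetD)
  qed
  ultimately show ?thesis
    using n unfolding touching_balls_def by blast
qed

lemma compact_continuous_norm_le:
  fixes f :: "'a::metric_space \<Rightarrow> 'b::real_normed_vector"
  assumes "compact S" "continuous_on S f"
  obtains B where "\<And>x. x \<in> S \<Longrightarrow> norm (f x) \<le> B"
  using compact_imp_bounded[OF compact_continuous_image[OF assms(2,1)]]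
  unfolding bounded_iff by (metis image_eqI)

lemma compact_continuous_nonzero_norm_ge:
  fixes f :: "'a::metric_space \<Rightarrow> 'b::real_normed_vector"
  assumes "compact S" "continuous_on S f" "\<And>x. x \<in> S \<Longrightarrow> f x \<noteq> 0"
  obtains m where "0 < m" "\<And>x. x \<in> S \<Longrightarrow> m \<le> norm (f x)"
proof (cases "S = {}")
  case False
  obtain z where "z \<in> S" "\<And>y. y \<in> S \<Longrightarrow> norm (f z) \<le> norm (f y)"
    using continuous_attains_inf[OF assms(1) False continuous_on_norm[OF assms(2)]] by blast
  then show ?thesis
    using that[of "norm (f z)"] assms(3) by auto
qed (use that[of 1] in auto)

lemma chart_touching_balls:
  fixes \<phi> :: "'a::euclidean_space \<Rightarrow> real"
  assumes chart: "open \<Omega>" "open U" "\<Omega> \<inter> U = {x\<in>U. \<phi> x < 0}" "continuous_on U \<phi>"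
    and S: "convex S" "S \<subseteq> U" "ball q (2 * \<rho>) \<subseteq> S"
    and d1: "\<And>x. x \<in> S \<Longrightarrow> (\<phi> has_derivative (\<lambda>v. D1 x \<bullet> v)) (at x)"
    and d2: "\<And>x. x \<in> S \<Longrightarrow> (D1 has_derivative blinfun_apply (D2 x)) (at x)"
    and M: "\<And>x. x \<in> S \<Longrightarrow> norm (D2 x) \<le> M" "0 \<le> M"
    and q: "q \<in> frontier \<Omega>" and "0 < \<rho>" "2 * M * \<rho> < norm (D1 q)"
  shows "touching_balls \<Omega> \<rho> q (sgn (D1 q))"
proof (rule sublevel_touching_balls[OF \<open>0 < \<rho>\<close> M(2) \<open>2 * M * \<rho> < norm (D1 q)\<close> _ chart(3)])
  have "q \<in> S"
    using S(3) \<open>0 < \<rho>\<close> by auto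
  then have "\<phi> q = 0"
    using chart q S(2) by (intro chart_vanishes_on_frontier[of \<Omega> U]) auto
  moreover have "\<bar>\<phi> y - \<phi> q - D1 q \<bullet> (y - q)\<bar> \<le> M * norm (y - q)^2" if "y \<in> ball q (2 * \<rho>)" for y
    using that S \<open>q \<in> S\<close> by (intro taylor_second_order_bound[OF S(1) d1 d2 M(1)]) auto
  ultimately show "\<bar>\<phi> y - D1 q \<bullet> (y - q)\<bar> \<le> M * norm (y - q)^2" if "y \<in> ball q (2 * \<rho>)" for y
    using that by simp
qed (use S in auto)

lemma C2_boundary_local_touching_balls:
  fixes \<Omega> :: "'a::euclidean_space set"
  assumes C2: "C2_boundary \<Omega>" and p: "p \<in> frontier \<Omega>"
  shows "\<exists>\<epsilon>>0. \<exists>\<rho>>0. \<forall>q\<in>frontier \<Omega> \<inter> ball p \<epsilon>. \<exists>n. touching_balls \<Omega> \<rho> q n"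
proof -
  obtain U \<phi> D1 D2 where U: "open U" "p \<in> U" "\<Omega> \<inter> U = {x\<in>U. \<phi> x < 0}"
    and d1: "\<And>x. x \<in> U \<Longrightarrow> (\<phi> has_derivative (\<lambda>v. D1 x \<bullet> v)) (at x)"
    and d2: "\<And>x. x \<in> U \<Longrightarrow> (D1 has_derivative blinfun_apply (D2 x)) (at x)"
    and D2: "continuous_on U D2" and nz: "\<And>x. x \<in> U \<Longrightarrow> D1 x \<noteq> 0"
    by (rule C2_boundaryE[OF C2 p], rule that)
  obtain e where "0 < e" and S: "cball p e \<subseteq> U"
    using U open_contains_cball by blast
  have "continuous_on U \<phi>" "continuous_on U D1"
    using d1 d2 by (meson has_derivative_continuous continuous_at_imp_continuous_on)+
  then have "continuous_on (cball p e) D1"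
    using S continuous_on_subset by blast
  then obtain m where m: "0 < m" "\<And>x. x \<in> cball p e \<Longrightarrow> m \<le> norm (D1 x)"
    by (rule compact_continuous_nonzero_norm_ge[OF compact_cball]) (use nz S in blast)+
  obtain B where B: "\<And>x. x \<in> cball p e \<Longrightarrow> norm (D2 x) \<le> B"
    using compact_continuous_norm_le[OF compact_cball continuous_on_subset[OF D2 S]] by blast
  define M where "M = max 1 B"
  define \<rho> where "\<rho> = min (e / 4) (m / (4 * M))"
  have "1 \<le> M" "0 < \<rho>"
    using \<open>0 < e\<close> m(1) by (auto simp: M_def \<rho>_def)
  have "2 * M * \<rho> \<le> m / 2"
    using \<open>1 \<le> M\<close> mult_left_mono[of \<rho> "m / (4 * M)" "2 * M"] by (simp add: \<rho>_def)
  have "touching_balls \<Omega> \<rho> q (sgn (D1 q))" if q: "q \<in> frontier \<Omega> \<inter> ball p (e / 2)" for q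
  proof (rule chart_touching_balls[OF C2_boundary_imp_open[OF C2] U(1,3) \<open>continuous_on U \<phi>\<close>
        convex_cball S])
    show "ball q (2 * \<rho>) \<subseteq> cball p e"
      using q by (auto simp: ball_subset_cball_iff dist_commute \<rho>_def)
    then have "q \<in> cball p e"
      using \<open>0 < \<rho>\<close> centre_in_ball[of q "2 * \<rho>"] by (meson mult_pos_pos subsetD zero_less_numeral)
    then show "2 * M * \<rho> < norm (D1 q)"
      using \<open>2 * M * \<rho> \<le> m / 2\<close> m by fastforce
    show "norm (D2 x) \<le> M" if "x \<in> cball p e" for x
      using B[OF that] by (simp add: M_def)
  qed (use q S \<open>0 < \<rho>\<close> \<open>1 \<le> M\<close> d1 d2 in auto)
  moreover have "0 < e / 2"
    using \<open>0 < e\<close> by simp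
  ultimately show ?thesis
    using \<open>0 < \<rho>\<close> by blast
qed

lemma ball_subset_ball_along_unit:
  fixes q n :: "'a::real_normed_vector"
  assumes "norm n = 1" "r' \<le> r"
  shows "ball (q + r' *\<^sub>R n) r' \<subseteq> ball (q + r *\<^sub>R n) r"
proof
  fix x assume "x \<in> ball (q + r' *\<^sub>R n) r'"
  moreover have "dist (q + r *\<^sub>R n) (q + r' *\<^sub>R n) = r - r'"
    using assms by (simp add: dist_norm flip: scaleR_diff_left)
  ultimately show "x \<in> ball (q + r *\<^sub>R n) r"
    using dist_triangle[of "q + r *\<^sub>R n" x "q + r' *\<^sub>R n"] by simp
qed

lemma touching_balls_mono:
  assumes "touching_balls S r q n" "r' \<le> r"
  shows "touching_balls S r' q n"
proof -
  have "norm (- n) = 1"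
    using assms(1) by (simp add: touching_balls_def)
  then have "ball (q - r' *\<^sub>R n) r' \<subseteq> ball (q - r *\<^sub>R n) r"
    using ball_subset_ball_along_unit[of "- n" r' r q] assms(2) by simp
  then show ?thesis
    using assms ball_subset_ball_along_unit[of n r' r q] unfolding touching_balls_def by blast
qed

lemma compact_uniform_radius:
  fixes K :: "'a::metric_space set" and P :: "real \<Rightarrow> 'a \<Rightarrow> bool"
  assumes "compact K"
    and local: "\<And>p. p \<in> K \<Longrightarrow> \<exists>\<epsilon>>0. \<exists>\<rho>>0. \<forall>q\<in>K \<inter> ball p \<epsilon>. P \<rho> q"
    and mono: "\<And>\<rho> \<rho>' q. 0 < \<rho>' \<Longrightarrow> \<rho>' \<le> \<rho> \<Longrightarrow> P \<rho> q \<Longrightarrow> P \<rho>' q"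
  obtains \<rho> where "0 < \<rho>" "\<And>q. q \<in> K \<Longrightarrow> P \<rho> q"
proof -
  obtain E R where ER: "\<And>p. p \<in> K \<Longrightarrow> 0 < E p \<and> 0 < R p \<and> (\<forall>q\<in>K \<inter> ball p (E p). P (R p) q)"
    using local by metis
  have "K \<subseteq> (\<Union>p\<in>K. ball p (E p))"
    using ER by force
  then obtain F where F: "F \<subseteq> K" "finite F" "K \<subseteq> (\<Union>p\<in>F. ball p (E p))"
    using compactE_image[OF assms(1), of K "\<lambda>p. ball p (E p)"] by blast
  define \<rho> where "\<rho> = Min (insert 1 (R ` F))"
  show ?thesis
  proof
    show "0 < \<rho>"
      using F ER by (auto simp: \<rho>_def)
    fix q assume "q \<in> K"
    then obtain p where "p \<in> F" "q \<in> ball p (E p)"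
      using F(3) by blast
    moreover have "\<rho> \<le> R p"
      using \<open>p \<in> F\<close> F(2) by (simp add: \<rho>_def)
    ultimately show "P \<rho> q"
      using ER[of p] F(1) \<open>q \<in> K\<close> \<open>0 < \<rho>\<close> mono by blast
  qed
qed

lemma C2_boundary_uniform_touching_balls:
  fixes \<Omega> :: "'a::euclidean_space set"
  assumes "bounded \<Omega>" "C2_boundary \<Omega>"
  obtains r where "0 < r" "\<And>q. q \<in> frontier \<Omega> \<Longrightarrow> \<exists>n. touching_balls \<Omega> r q n"
  using compact_uniform_radius[OF compact_frontier_bounded[OF assms(1)]
      C2_boundary_local_touching_balls[OF assms(2)]] touching_balls_mono
  by metis

section \<open>The background grid and thin sets\<close>

lemma mem_grid_cell:
  "x \<in> grid_cell h k \<longleftrightarrow> (\<forall>b\<in>Basis. h * (k \<bullet> b) \<le> x \<bullet> b \<and> x \<bullet> b \<le> h * (k \<bullet> b) + h)"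
  by (simp add: grid_cell_def mem_box inner_add_left inner_sum_Basis algebra_simps)

definition grid_index :: "real \<Rightarrow> 'a::euclidean_space \<Rightarrow> 'a" where
  "grid_index h x = (\<Sum>b\<in>Basis. of_int \<lfloor>(x \<bullet> b) / h\<rfloor> *\<^sub>R b)"

lemma grid_index_in_int_pts: "grid_index h x \<in> int_pts"
  by (simp add: int_pts_def grid_index_def inner_sum_left_Basis)

lemma mem_grid_cell_grid_index:
  assumes "0 < h"
  shows "x \<in> grid_cell h (grid_index h x)"
  unfolding mem_grid_cell
proof
  fix b :: 'a assume "b \<in> Basis"
  have "h * of_int \<lfloor>(x \<bullet> b) / h\<rfloor> \<le> x \<bullet> b"
    using assms mult_left_mono[OF of_int_floor_le[of "(x \<bullet> b) / h"], of h] by simp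
  moreover have "x \<bullet> b \<le> h * of_int \<lfloor>(x \<bullet> b) / h\<rfloor> + h"
    using assms real_of_int_floor_add_one_gt[of "(x \<bullet> b) / h"] by (simp add: field_simps)
  ultimately show "h * (grid_index h x \<bullet> b) \<le> x \<bullet> b \<and> x \<bullet> b \<le> h * (grid_index h x \<bullet> b) + h"
    using \<open>b \<in> Basis\<close> by (simp add: grid_index_def inner_sum_left_Basis)
qed

lemma measure_grid_cell:
  assumes "0 < h"
  shows "measure lebesgue (grid_cell h (k::'a::euclidean_space)) = h ^ DIM('a)"
  using assms by (simp add: grid_cell_def measure_lborel_cbox_eq inner_add_left inner_sum_Basis
      algebra_simps prod_constant)

lemma grid_cell_Int_closed_lmeasurable:
  "closed A \<Longrightarrow> grid_cell h k \<inter> A \<in> lmeasurable"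
  by (rule lmeasurable_compact) (simp add: grid_cell_def compact_Int_closed)

lemma grid_cell_inner_diff:
  assumes "x \<in> grid_cell h k" "y \<in> grid_cell h k'" "b \<in> Basis"
  shows "\<bar>(x - y) \<bullet> b - h * (k \<bullet> b - k' \<bullet> b)\<bar> \<le> h"
proof -
  have "h * (k \<bullet> b) \<le> x \<bullet> b \<and> x \<bullet> b \<le> h * (k \<bullet> b) + h"
    "h * (k' \<bullet> b) \<le> y \<bullet> b \<and> y \<bullet> b \<le> h * (k' \<bullet> b) + h"
    using assms by (auto simp: mem_grid_cell)
  then show ?thesis
    by (simp add: inner_diff_left abs_le_iff algebra_simps)
qed

lemma grid_cell_dist_le:
  fixes x y :: "'a::euclidean_space" and h :: real
  assumes "x \<in> grid_cell h k" "y \<in> grid_cell h k"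
  shows "norm (x - y) \<le> DIM('a) * h"
proof -
  have "norm (x - y) \<le> (\<Sum>b\<in>Basis. \<bar>(x - y) \<bullet> b\<bar>)"
    by (rule norm_le_l1)
  also have "\<dots> \<le> (\<Sum>b\<in>(Basis::'a set). h)"
    using grid_cell_inner_diff[OF assms] by (intro sum_mono) simp
  finally show ?thesis by simp
qed

lemma cell_centroid_in_grid_cell:
  "0 < h \<Longrightarrow> cell_centroid h k \<in> grid_cell h k"
  by (auto simp: mem_grid_cell cell_centroid_def inner_add_left inner_sum_Basis algebra_simps)

lemma Ints_less_imp_add_one_le:
  fixes a b :: real
  assumes "a \<in> \<int>" "b \<in> \<int>" "a < b"
  shows "a + 1 \<le> b"
  using assms by (elim Ints_cases) simp

lemma negligible_grid_cell_Int:
  assumes "0 < h" "k \<in> int_pts" "k' \<in> int_pts" "k \<noteq> k'"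
  shows "negligible (grid_cell h k \<inter> grid_cell h k')"
proof -
  have *: "negligible (grid_cell h u \<inter> grid_cell h v)"
    if "u \<in> int_pts" "v \<in> int_pts" "b \<in> Basis" "u \<bullet> b < v \<bullet> b" for u v b
  proof (rule negligible_subset[OF negligible_hyperplane[of b "h * (u \<bullet> b + 1)"]])
    have "u \<bullet> b + 1 \<le> v \<bullet> b"
      using that by (intro Ints_less_imp_add_one_le) (auto simp: int_pts_def)
    then have "h * (u \<bullet> b + 1) \<le> h * (v \<bullet> b)"
      using assms(1) by simp
    moreover have "x \<bullet> b \<le> h * (u \<bullet> b) + h" "h * (v \<bullet> b) \<le> x \<bullet> b"
      if "x \<in> grid_cell h u \<inter> grid_cell h v" for x
      using that \<open>b \<in> Basis\<close> by (auto simp: mem_grid_cell)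
    ultimately show "grid_cell h u \<inter> grid_cell h v \<subseteq> {x. b \<bullet> x = h * (u \<bullet> b + 1)}"
      by (force simp: inner_commute algebra_simps)
  qed (use that(3) in auto)
  obtain b where "b \<in> Basis" "k \<bullet> b \<noteq> k' \<bullet> b"
    using assms(4) euclidean_eqI by blast
  then show ?thesis
    using *[of k k' b] *[of k' k b] assms(2,3) by (cases "k \<bullet> b < k' \<bullet> b") (auto simp: Int_commute)
qed

lemma measure_UN_grid_cell_Int:
  fixes I :: "'a::euclidean_space set"
  assumes "finite I" "I \<subseteq> int_pts" "0 < h" "closed A"
  shows "measure lebesgue (\<Union>k\<in>I. grid_cell h k \<inter> A) = (\<Sum>k\<in>I. measure lebesgue (grid_cell h k \<inter> A))"
proof (rule measure_negligible_finite_Union_image[OF assms(1)])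
  show "grid_cell h k \<inter> A \<in> lmeasurable" for k
    using grid_cell_Int_closed_lmeasurable[OF assms(4)] .
  show "pairwise (\<lambda>k k'. negligible ((grid_cell h k \<inter> A) \<inter> (grid_cell h k' \<inter> A))) I"
    using negligible_grid_cell_Int[OF assms(3)] assms(2)
    by (auto simp: pairwise_def intro: negligible_subset)
qed

lemma card_Ints_between:
  fixes lo hi :: real
  assumes "lo \<le> hi"
  shows "finite {z\<in>\<int>. lo \<le> z \<and> z \<le> hi}" "card {z\<in>\<int>. lo \<le> z \<and> z \<le> hi} \<le> hi - lo + 1"
proof -
  have eq: "{z\<in>\<int>. lo \<le> z \<and> z \<le> hi} = real_of_int ` {\<lceil>lo\<rceil>..\<lfloor>hi\<rfloor>}"
  proof
    show "{z\<in>\<int>. lo \<le> z \<and> z \<le> hi} \<subseteq> real_of_int ` {\<lceil>lo\<rceil>..\<lfloor>hi\<rfloor>}"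
    proof
      fix z assume z: "z \<in> {z\<in>\<int>. lo \<le> z \<and> z \<le> hi}"
      then obtain i where "z = of_int i"
        by (auto elim: Ints_cases)
      with z show "z \<in> real_of_int ` {\<lceil>lo\<rceil>..\<lfloor>hi\<rfloor>}"
        by (auto simp: ceiling_le_iff le_floor_iff)
    qed
  qed (auto simp: ceiling_le_iff le_floor_iff)
  then show "finite {z\<in>\<int>. lo \<le> z \<and> z \<le> hi}"
    by simp
  have "card {z\<in>\<int>. lo \<le> z \<and> z \<le> hi} \<le> nat (\<lfloor>hi\<rfloor> - \<lceil>lo\<rceil> + 1)"
    unfolding eq using card_image_le[of "{\<lceil>lo\<rceil>..\<lfloor>hi\<rfloor>}" real_of_int] by simp
  also have "real (nat (\<lfloor>hi\<rfloor> - \<lceil>lo\<rceil> + 1)) \<le> hi - lo + 1"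
    using assms of_int_floor_le[of hi] le_of_int_ceiling[of lo] by linarith
  finally show "card {z\<in>\<int>. lo \<le> z \<and> z \<le> hi} \<le> hi - lo + 1"
    by linarith
qed

lemma card_int_pts_box:
  fixes V :: "'a::euclidean_space set" and lo hi :: "'a \<Rightarrow> real"
  assumes le: "\<And>b. b \<in> Basis \<Longrightarrow> lo b \<le> hi b"
    and V: "V \<subseteq> int_pts" "\<And>k b. k \<in> V \<Longrightarrow> b \<in> Basis \<Longrightarrow> lo b \<le> k \<bullet> b \<and> k \<bullet> b \<le> hi b"
  shows "finite V" "card V \<le> (\<Prod>b\<in>Basis. hi b - lo b + 1)"
proof -
  define Z where "Z b = {z\<in>\<int>. lo b \<le> z \<and> z \<le> hi b}" for b
  define coords where "coords k = restrict (\<lambda>b. k \<bullet> b) Basis" for k :: 'a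
  have inj: "inj_on coords V"
    by (rule inj_onI) (metis coords_def euclidean_eqI restrict_apply')
  have sub: "coords ` V \<subseteq> PiE Basis Z"
    using V by (auto simp: coords_def Z_def int_pts_def)
  have fin: "finite (PiE Basis Z)"
    by (rule finite_PiE) (auto simp: Z_def card_Ints_between le)
  show "finite V"
    using finite_imageD[OF finite_subset[OF sub fin] inj] .
  have "card V \<le> card (PiE Basis Z)"
    using card_image[OF inj] card_mono[OF fin sub] by simp
  also have "\<dots> = (\<Prod>b\<in>Basis. card (Z b))"
    by (simp add: card_PiE)
  finally have "real (card V) \<le> (\<Prod>b\<in>Basis. real (card (Z b)))"
    by (metis of_nat_le_iff of_nat_prod)
  also have "\<dots> \<le> (\<Prod>b\<in>Basis. hi b - lo b + 1)"
    by (rule prod_mono) (auto simp: Z_def card_Ints_between le)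
  finally show "card V \<le> (\<Prod>b\<in>Basis. hi b - lo b + 1)" .
qed

lemma card_le_card_image_mult:
  fixes Y :: real
  assumes "finite I" "\<And>c. c \<in> f ` I \<Longrightarrow> card {k\<in>I. f k = c} \<le> Y"
  shows "card I \<le> card (f ` I) * Y"
proof -
  have "I = (\<Union>c\<in>f ` I. {k\<in>I. f k = c})"
    by auto
  then have "card I \<le> (\<Sum>c\<in>f ` I. card {k\<in>I. f k = c})"
    using card_UN_le[of "f ` I" "\<lambda>c. {k\<in>I. f k = c}"] assms(1) by simp
  then have "real (card I) \<le> (\<Sum>c\<in>f ` I. real (card {k\<in>I. f k = c}))"
    by (metis of_nat_le_iff of_nat_sum)
  also have "\<dots> \<le> (\<Sum>c\<in>f ` I. Y)"
    using assms(2) by (rule sum_mono)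
  finally show ?thesis by simp
qed

abbreviation cube :: "'a::euclidean_space \<Rightarrow> real \<Rightarrow> 'a set" where
  "cube p R \<equiv> cbox (p - R *\<^sub>R One) (p + R *\<^sub>R One)"

lemma mem_cube: "x \<in> cube p R \<longleftrightarrow> (\<forall>b\<in>Basis. p \<bullet> b - R \<le> x \<bullet> b \<and> x \<bullet> b \<le> p \<bullet> b + R)"
  by (simp add: mem_box inner_diff_left inner_add_left inner_sum_Basis)

lemma cball_subset_cube: "cball p R \<subseteq> cube p R"
proof
  fix x assume "x \<in> cball p R"
  then have "\<bar>(x - p) \<bullet> b\<bar> \<le> R" if "b \<in> Basis" for b
    using Basis_le_norm[OF that, of "x - p"] by (simp add: dist_norm norm_minus_commute)
  then show "x \<in> cube p R"
    unfolding mem_cube by (smt (verit) inner_diff_left)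
qed

definition grid_cells_meeting :: "real \<Rightarrow> 'a::euclidean_space set \<Rightarrow> 'a set" where
  "grid_cells_meeting s A = {k\<in>int_pts. grid_cell s k \<inter> A \<noteq> {}}"

lemma grid_cells_meeting_cube_bounds:
  assumes "k \<in> grid_cells_meeting s A" "A \<subseteq> cube p R" "b \<in> Basis" "0 < s"
  shows "(p \<bullet> b - R) / s - 1 \<le> k \<bullet> b" "k \<bullet> b \<le> (p \<bullet> b + R) / s"
proof -
  obtain x where "x \<in> grid_cell s k" "x \<in> cube p R"
    using assms(1,2) by (auto simp: grid_cells_meeting_def)
  then have "s * (k \<bullet> b) \<le> x \<bullet> b" "x \<bullet> b \<le> s * (k \<bullet> b) + s"
    "p \<bullet> b - R \<le> x \<bullet> b" "x \<bullet> b \<le> p \<bullet> b + R"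
    using assms(3) by (auto simp: mem_grid_cell mem_cube)
  then show "(p \<bullet> b - R) / s - 1 \<le> k \<bullet> b" "k \<bullet> b \<le> (p \<bullet> b + R) / s"
    using assms(4) by (simp_all add: field_simps)
qed

lemma finite_grid_cells_meeting:
  fixes A :: "'a::euclidean_space set"
  assumes "bounded A" "0 < s"
  shows "finite (grid_cells_meeting s A)"
proof -
  obtain c M where "A \<subseteq> cball c M" "0 \<le> M"
    using assms(1) bounded_subset_cball by blast
  then have "A \<subseteq> cube c M"
    using cball_subset_cube by blast
  show ?thesis
    unfolding grid_cells_meeting_def
  proof (rule card_int_pts_box(1)[of "\<lambda>b. (c \<bullet> b - M) / s - 1" "\<lambda>b. (c \<bullet> b + M) / s"])
    show "(c \<bullet> b - M) / s - 1 \<le> (c \<bullet> b + M) / s" for b :: 'a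
      using \<open>0 \<le> M\<close> assms(2) by (simp add: field_simps)
    fix k b :: 'a assume "k \<in> {k\<in>int_pts. grid_cell s k \<inter> A \<noteq> {}}" "b \<in> Basis"
    then show "(c \<bullet> b - M) / s - 1 \<le> k \<bullet> b \<and> k \<bullet> b \<le> (c \<bullet> b + M) / s"
      using grid_cells_meeting_cube_bounds[OF _ \<open>A \<subseteq> cube c M\<close> _ assms(2)]
      by (simp add: grid_cells_meeting_def)
  qed auto
qed

lemma measure_le_card_grid_cells_meeting:
  fixes A :: "'a::euclidean_space set" and s :: real
  assumes "A \<in> sets lebesgue" "finite (grid_cells_meeting s A)" "0 < s"
  shows "measure lebesgue A \<le> real (card (grid_cells_meeting s A)) * s ^ DIM('a)"
proof -
  define I where "I = grid_cells_meeting s A"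
  have "A \<subseteq> (\<Union>k\<in>I. grid_cell s k)"
  proof
    fix x assume "x \<in> A"
    then have "grid_index s x \<in> I" "x \<in> grid_cell s (grid_index s x)"
      using mem_grid_cell_grid_index[OF assms(3)] grid_index_in_int_pts
      unfolding I_def grid_cells_meeting_def by blast+
    then show "x \<in> (\<Union>k\<in>I. grid_cell s k)"
      by blast
  qed
  moreover have cells: "(\<Union>k\<in>I. grid_cell s k) \<in> fmeasurable lebesgue"
    using assms(2) by (intro fmeasurable.finite_UN) (auto simp: I_def grid_cell_def)
  ultimately have "measure lebesgue A \<le> measure lebesgue (\<Union>k\<in>I. grid_cell s k)"
    using assms(1) by (intro measure_mono_fmeasurable)
  also have "\<dots> \<le> (\<Sum>k\<in>I. measure lebesgue (grid_cell s k))"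
    using assms(2) by (intro measure_UNION_le) (auto simp: I_def grid_cell_def fmeasurableD)
  also have "\<dots> = real (card I) * s ^ DIM('a)"
    using measure_grid_cell[OF assms(3), where 'a='a] by simp
  finally show ?thesis
    by (simp add: I_def)
qed

lemma prod_Basis_single:
  fixes X Y :: real
  assumes "b0 \<in> (Basis::'a::euclidean_space set)"
  shows "(\<Prod>b\<in>(Basis::'a set). if b = b0 then Y else X) = Y * X ^ (DIM('a) - 1)"
proof -
  have "(\<Prod>b\<in>(Basis::'a set). if b = b0 then Y else X) = Y * (\<Prod>b\<in>Basis - {b0}. if b = b0 then Y else X)"
    using assms by (simp add: prod.remove)
  also have "(\<Prod>b\<in>Basis - {b0}. if b = b0 then Y else X) = (\<Prod>b\<in>(Basis::'a set) - {b0}. X)"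
    by (rule prod.cong) auto
  finally show ?thesis
    using assms by (simp add: card_Diff_singleton)
qed

text \<open>\<open>drop_coord b0\<close> maps a grid cell index to the index of its column in direction \<open>b0\<close>.\<close>

definition drop_coord :: "'a::euclidean_space \<Rightarrow> 'a \<Rightarrow> 'a" where
  "drop_coord b0 k = k - (k \<bullet> b0) *\<^sub>R b0"

lemma inner_drop_coord:
  assumes "b \<in> Basis" "b0 \<in> Basis"
  shows "drop_coord b0 k \<bullet> b = (if b = b0 then 0 else k \<bullet> b)"
  using assms by (auto simp: drop_coord_def inner_diff_left inner_Basis)

lemma card_grid_columns_in_cube:
  fixes A :: "'a::euclidean_space set" and s R :: real
  assumes "A \<subseteq> cube p R" "b0 \<in> Basis" "0 < s" "0 \<le> R"
  shows "card (drop_coord b0 ` grid_cells_meeting s A) \<le> (2 * R / s + 2) ^ (DIM('a) - 1)"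
proof -
  define lo where "lo b = (if b = b0 then 0 else (p \<bullet> b - R) / s - 1)" for b
  define hi where "hi b = (if b = b0 then 0 else (p \<bullet> b + R) / s)" for b
  have "card (drop_coord b0 ` grid_cells_meeting s A) \<le> (\<Prod>b\<in>Basis. hi b - lo b + 1)"
  proof (rule card_int_pts_box(2))
    show "lo b \<le> hi b" for b
      using assms(3,4) by (simp add: lo_def hi_def field_simps)
    show "drop_coord b0 ` grid_cells_meeting s A \<subseteq> int_pts"
      using inner_drop_coord[OF _ assms(2)]
      by (auto simp: grid_cells_meeting_def int_pts_def split: if_splits)
    fix c b :: 'a assume "c \<in> drop_coord b0 ` grid_cells_meeting s A" "b \<in> Basis"
    then show "lo b \<le> c \<bullet> b \<and> c \<bullet> b \<le> hi b"
      using grid_cells_meeting_cube_bounds[OF _ assms(1) _ assms(3)] inner_drop_coord[OF _ assms(2)]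
      by (auto simp: lo_def hi_def)
  qed
  also have "\<dots> = (\<Prod>b\<in>Basis. if b = b0 then 1 else 2 * R / s + 2)"
    by (rule prod.cong) (auto simp: lo_def hi_def diff_divide_distrib add_divide_distrib)
  also have "\<dots> = (2 * R / s + 2) ^ (DIM('a) - 1)"
    using prod_Basis_single[OF assms(2)] by simp
  finally show ?thesis .
qed

text \<open>A set that is thin in direction \<open>b0\<close> meets at most \<open>2 Q + 3\<close> grid cells of size \<open>s\<close>
  in each column, hence has measure \<open>O(s)\<close>.\<close>

definition thin_in_direction :: "'a::euclidean_space set \<Rightarrow> 'a \<Rightarrow> real \<Rightarrow> real \<Rightarrow> bool" where
  "thin_in_direction A b0 s Q \<longleftrightarrow>
     (\<forall>x\<in>A. \<forall>y\<in>A. (\<forall>b\<in>Basis - {b0}. \<bar>(x - y) \<bullet> b\<bar> \<le> s) \<longrightarrow> \<bar>(x - y) \<bullet> b0\<bar> \<le> Q * s)"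

lemma thin_set_grid_column_bound:
  fixes A :: "'a::euclidean_space set" and s Q :: real
  assumes thin: "thin_in_direction A b0 s Q"
    and "0 < s" "b0 \<in> Basis" "x \<in> grid_cell s k \<inter> A" "y \<in> grid_cell s k' \<inter> A"
    and column: "\<forall>b\<in>Basis - {b0}. k \<bullet> b = k' \<bullet> b"
  shows "\<bar>k \<bullet> b0 - k' \<bullet> b0\<bar> \<le> Q + 1"
proof -
  have "\<bar>(x - y) \<bullet> b\<bar> \<le> s" if "b \<in> Basis - {b0}" for b
    using grid_cell_inner_diff[of x s k y k' b] assms(4,5) column that by auto
  then have "\<bar>(x - y) \<bullet> b0\<bar> \<le> Q * s"
    using thin assms(4,5) unfolding thin_in_direction_def by blast
  moreover have "\<bar>(x - y) \<bullet> b0 - s * (k \<bullet> b0 - k' \<bullet> b0)\<bar> \<le> s"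
    using grid_cell_inner_diff assms(3-5) by blast
  ultimately have "\<bar>s * (k \<bullet> b0 - k' \<bullet> b0)\<bar> \<le> s * (Q + 1)"
    by (simp add: algebra_simps)
  then have "s * \<bar>k \<bullet> b0 - k' \<bullet> b0\<bar> \<le> s * (Q + 1)"
    using \<open>0 < s\<close> by (simp add: abs_mult)
  then show ?thesis
    using \<open>0 < s\<close> by simp
qed

lemma card_grid_column_of_thin_set:
  fixes A :: "'a::euclidean_space set" and s Q :: real
  assumes thin: "thin_in_direction A b0 s Q"
    and "0 < s" "b0 \<in> Basis" "0 \<le> Q" and k0: "k0 \<in> grid_cells_meeting s A"
  shows "card {k\<in>grid_cells_meeting s A. drop_coord b0 k = drop_coord b0 k0} \<le> 2 * Q + 3"
proof -
  define c where "c = drop_coord b0 k0"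
  have same_column: "k \<bullet> b = c \<bullet> b" if "drop_coord b0 k = c" "b \<in> Basis - {b0}" for k b
    using that inner_drop_coord[of b b0 k] assms(3) by auto
  have near: "\<bar>k \<bullet> b0 - k0 \<bullet> b0\<bar> \<le> Q + 1"
    if k: "k \<in> grid_cells_meeting s A" "drop_coord b0 k = c" for k
  proof -
    obtain x y where "x \<in> grid_cell s k \<inter> A" "y \<in> grid_cell s k0 \<inter> A"
      using k(1) k0 by (auto simp: grid_cells_meeting_def)
    moreover have "\<forall>b\<in>Basis - {b0}. k \<bullet> b = k0 \<bullet> b"
      using same_column k(2) c_def by metis
    ultimately show ?thesis
      by (rule thin_set_grid_column_bound[OF thin assms(2,3)])
  qed
  have "card {k\<in>grid_cells_meeting s A. drop_coord b0 k = c} \<le> (\<Prod>b\<in>Basis.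
      (if b = b0 then k0 \<bullet> b0 + Q + 1 else c \<bullet> b) - (if b = b0 then k0 \<bullet> b0 - Q - 1 else c \<bullet> b) + 1)"
  proof (intro card_int_pts_box(2))
    fix k b :: 'a assume "k \<in> {k\<in>grid_cells_meeting s A. drop_coord b0 k = c}" "b \<in> Basis"
    then show "(if b = b0 then k0 \<bullet> b0 - Q - 1 else c \<bullet> b) \<le> k \<bullet> b \<and>
        k \<bullet> b \<le> (if b = b0 then k0 \<bullet> b0 + Q + 1 else c \<bullet> b)"
      using near[of k] same_column[of k b] by (auto simp: abs_le_iff)
  qed (use assms(4) in \<open>auto simp: grid_cells_meeting_def\<close>)
  also have "\<dots> = (\<Prod>b\<in>Basis. if b = b0 then 2 * Q + 3 else 1)"
    by (rule prod.cong) auto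
  also have "\<dots> = 2 * Q + 3"
    using prod_Basis_single[OF assms(3)] by simp
  finally show ?thesis
    by (simp add: c_def)
qed

lemma card_grid_cells_meeting_thin_set:
  fixes A :: "'a::euclidean_space set" and s Q R :: real
  assumes "A \<subseteq> cube p R" "b0 \<in> Basis" "0 < s" "0 \<le> R" "0 \<le> Q"
    and thin: "thin_in_direction A b0 s Q"
  shows "card (grid_cells_meeting s A) \<le> (2 * R / s + 2) ^ (DIM('a) - 1) * (2 * Q + 3)"
proof -
  have "finite (grid_cells_meeting s A)"
    using assms(1,3) bounded_subset[OF bounded_cbox] by (intro finite_grid_cells_meeting) auto
  then have "card (grid_cells_meeting s A)
      \<le> card (drop_coord b0 ` grid_cells_meeting s A) * (2 * Q + 3)"
    using card_grid_column_of_thin_set[OF thin assms(3,2,5)] by (intro card_le_card_image_mult) auto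
  also have "\<dots> \<le> (2 * R / s + 2) ^ (DIM('a) - 1) * (2 * Q + 3)"
    using card_grid_columns_in_cube[OF assms(1-4)] assms(5) by (intro mult_right_mono) auto
  finally show ?thesis .
qed

lemma power_DIM_split: "(x::real) ^ DIM('a::euclidean_space) = x ^ (DIM('a) - 1) * x"
  by (metis DIM_positive Suc_diff_1 mult.commute power_Suc)

lemma measure_thin_set:
  fixes A :: "'a::euclidean_space set" and s Q R :: real
  assumes "A \<in> sets lebesgue" "A \<subseteq> cube p R" "b0 \<in> Basis" "0 < s" "s \<le> 1" "0 \<le> R" "0 \<le> Q"
    and thin: "thin_in_direction A b0 s Q"
  shows "measure lebesgue A \<le> (2 * R + 2) ^ (DIM('a) - 1) * (2 * Q + 3) * s"
proof -
  have "finite (grid_cells_meeting s A)"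
    using assms(2,4) bounded_subset[OF bounded_cbox] by (intro finite_grid_cells_meeting) auto
  then have "measure lebesgue A \<le> real (card (grid_cells_meeting s A)) * s ^ DIM('a)"
    by (rule measure_le_card_grid_cells_meeting[OF assms(1) _ assms(4)])
  also have "\<dots> \<le> (2 * R / s + 2) ^ (DIM('a) - 1) * (2 * Q + 3) * s ^ DIM('a)"
    using card_grid_cells_meeting_thin_set[OF assms(2,3,4,6,7) thin] assms(4)
    by (intro mult_right_mono) auto
  also have "\<dots> = ((2 * R / s + 2) * s) ^ (DIM('a) - 1) * (2 * Q + 3) * s"
    unfolding power_DIM_split power_mult_distrib by (simp only: mult_ac)
  also have "\<dots> \<le> (2 * R + 2) ^ (DIM('a) - 1) * (2 * Q + 3) * s"
  proof -
    have "(2 * R / s + 2) * s \<le> 2 * R + 2"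
      using assms(4,5) by (simp add: distrib_right)
    then have "((2 * R / s + 2) * s) ^ (DIM('a) - 1) \<le> (2 * R + 2) ^ (DIM('a) - 1)"
      using assms(4,6) by (intro power_mono) auto
    then show ?thesis
      using assms(4,7) by (intro mult_right_mono) auto
  qed
  finally show ?thesis .
qed

section \<open>Tubes around the boundary\<close>

lemma mvt_along_basis_direction:
  fixes \<phi> :: "'a::euclidean_space \<Rightarrow> real"
  assumes line: "\<And>\<tau>. min 0 t \<le> \<tau> \<Longrightarrow> \<tau> \<le> max 0 t \<Longrightarrow> x + \<tau> *\<^sub>R e \<in> S"
    and d: "\<And>z. z \<in> S \<Longrightarrow> (\<phi> has_derivative (\<lambda>v. D z \<bullet> v)) (at z)"
    and m: "\<And>z. z \<in> S \<Longrightarrow> m \<le> \<bar>D z \<bullet> e\<bar>"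
  shows "m * \<bar>t\<bar> \<le> \<bar>\<phi> (x + t *\<^sub>R e) - \<phi> x\<bar>"
proof (cases "t = 0")
  case False
  define f where "f = (\<lambda>\<tau>. \<phi> (x + \<tau> *\<^sub>R e))"
  have "(f has_real_derivative D (x + \<tau> *\<^sub>R e) \<bullet> e) (at \<tau>)"
    if "min 0 t \<le> \<tau>" "\<tau> \<le> max 0 t" for \<tau>
  proof -
    have "((\<lambda>\<tau>. x + \<tau> *\<^sub>R e) has_derivative (\<lambda>h. h *\<^sub>R e)) (at \<tau>)"
      by (auto intro!: derivative_eq_intros)
    from has_derivative_compose[OF this d[OF line[OF that]]]
    have "(f has_derivative (\<lambda>h. D (x + \<tau> *\<^sub>R e) \<bullet> (h *\<^sub>R e))) (at \<tau>)"
      by (simp add: f_def)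
    moreover have "(\<lambda>h. D (x + \<tau> *\<^sub>R e) \<bullet> (h *\<^sub>R e)) = (*) (D (x + \<tau> *\<^sub>R e) \<bullet> e)"
      by (auto simp: mult.commute)
    ultimately show ?thesis
      by (simp add: has_field_derivative_def)
  qed
  moreover have "min 0 t < max 0 t"
    using False by (auto simp: min_def max_def)
  ultimately obtain z where z: "min 0 t < z" "z < max 0 t"
    "f (max 0 t) - f (min 0 t) = (max 0 t - min 0 t) * (D (x + z *\<^sub>R e) \<bullet> e)"
    using MVT2[of "min 0 t" "max 0 t" f "\<lambda>\<tau>. D (x + \<tau> *\<^sub>R e) \<bullet> e"] by blast
  have "m \<le> \<bar>D (x + z *\<^sub>R e) \<bullet> e\<bar>"
    using z by (intro m line) auto
  moreover have "\<bar>f (max 0 t) - f (min 0 t)\<bar> = \<bar>t\<bar> * \<bar>D (x + z *\<^sub>R e) \<bullet> e\<bar>"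
    using z(3) by (auto simp: min_def max_def abs_mult)
  moreover have "\<bar>f (max 0 t) - f (min 0 t)\<bar> = \<bar>\<phi> (x + t *\<^sub>R e) - \<phi> x\<bar>"
    by (auto simp: min_def max_def f_def)
  ultimately show ?thesis
    by (metis abs_ge_zero mult.commute mult_right_mono)
qed simp

text \<open>Moving along \<open>b0\<close> changes \<open>\<phi>\<close> at rate at least \<open>m\<close>, moving in the other
  directions at rate at most \<open>L\<close>; so a band \<open>|\<phi>| \<le> s\<close> is thin in direction \<open>b0\<close>.\<close>

lemma level_set_thin_in_direction:
  fixes \<phi> :: "'a::euclidean_space \<Rightarrow> real"
  assumes d: "\<And>z. z \<in> cube p R \<Longrightarrow> (\<phi> has_derivative (\<lambda>v. D z \<bullet> v)) (at z)"
    and L: "\<And>z. z \<in> cube p R \<Longrightarrow> norm (D z) \<le> L"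
    and m: "\<And>z. z \<in> cube p R \<Longrightarrow> m \<le> \<bar>D z \<bullet> b0\<bar>" "0 < m" "b0 \<in> Basis"
    and xy: "x \<in> cube p R" "y \<in> cube p R" "\<bar>\<phi> x\<bar> \<le> s" "\<bar>\<phi> y\<bar> \<le> s"
    and close: "\<forall>b\<in>Basis - {b0}. \<bar>(x - y) \<bullet> b\<bar> \<le> s"
  shows "\<bar>(x - y) \<bullet> b0\<bar> \<le> (L * DIM('a) + 2) / m * s"
proof -
  define t where "t = (y - x) \<bullet> b0"
  define z where "z = x + t *\<^sub>R b0"
  have z_inner: "z \<bullet> b = (if b = b0 then y \<bullet> b0 else x \<bullet> b)" if "b \<in> Basis" for b
    using that m(3) by (auto simp: z_def t_def inner_add_left inner_diff_left inner_Basis)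
  have line: "x + \<tau> *\<^sub>R b0 \<in> cube p R" if "min 0 t \<le> \<tau>" "\<tau> \<le> max 0 t" for \<tau>
    using xy(1,2) that m(3)
    by (auto simp: mem_cube t_def inner_add_left inner_diff_left inner_Basis min_def max_def
        split: if_splits dest!: bspec)
  have "m * \<bar>t\<bar> \<le> \<bar>\<phi> z - \<phi> x\<bar>"
    unfolding z_def by (rule mvt_along_basis_direction[OF line d m(1)])
  moreover have "\<bar>\<phi> y - \<phi> z\<bar> \<le> L * norm (y - z)"
    using line[of t] xy(2) by (intro lipschitz_from_gradient_bound[OF convex_box(1) d L]) (auto simp: z_def)
  moreover have "norm (y - z) \<le> DIM('a) * s"
  proof -
    have "norm (y - z) \<le> (\<Sum>b\<in>Basis. \<bar>(y - z) \<bullet> b\<bar>)"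
      by (rule norm_le_l1)
    also have "\<dots> \<le> (\<Sum>b\<in>(Basis::'a set). s)"
      using close xy(3) by (intro sum_mono) (auto simp: z_inner inner_diff_left abs_minus_commute)
    finally show ?thesis by simp
  qed
  moreover have "0 \<le> L"
    using L[OF xy(1)] norm_ge_zero[of "D x"] by linarith
  ultimately have "m * \<bar>t\<bar> \<le> (L * DIM('a) + 2) * s"
    using xy(3,4) mult_left_mono[of "norm (y - z)" "DIM('a) * s" L] by (simp add: algebra_simps)
  then show ?thesis
    using m(2) by (simp add: t_def field_simps abs_minus_commute inner_diff_left)
qed

lemma cube_subset_ball:
  fixes p :: "'a::euclidean_space" and R :: real
  assumes "DIM('a) * R < e"
  shows "cube p R \<subseteq> ball p e"
proof
  fix x assume x: "x \<in> cube p R"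
  have "norm (x - p) \<le> (\<Sum>b\<in>Basis. \<bar>(x - p) \<bullet> b\<bar>)"
    by (rule norm_le_l1)
  also have "\<dots> \<le> (\<Sum>b\<in>(Basis::'a set). R)"
    using x by (intro sum_mono) (auto simp: mem_cube inner_diff_left abs_le_iff)
  finally show "x \<in> ball p e"
    using assms by (simp add: dist_norm norm_minus_commute)
qed

lemma nonvanishing_field_cube:
  fixes D :: "'a::euclidean_space \<Rightarrow> 'a"
  assumes "open U" "p \<in> U" "continuous_on U D" "D p \<noteq> 0"
  obtains R b0 m L where "0 < R" "b0 \<in> Basis" "0 < m" "cube p R \<subseteq> U"
    "\<And>x. x \<in> cube p R \<Longrightarrow> m \<le> \<bar>D x \<bullet> b0\<bar>" "\<And>x. x \<in> cube p R \<Longrightarrow> norm (D x) \<le> L"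
proof -
  obtain b0 where b0: "b0 \<in> Basis" "D p \<bullet> b0 \<noteq> 0"
    using assms(4) euclidean_all_zero_iff by blast
  define m where "m = \<bar>D p \<bullet> b0\<bar> / 2"
  have "0 < m"
    using b0 by (simp add: m_def)
  have "continuous_on U (\<lambda>x. D x \<bullet> b0)"
    by (intro continuous_intros assms(3))
  then obtain e1 where "0 < e1" and e1: "\<And>x. x \<in> U \<Longrightarrow> dist x p < e1 \<Longrightarrow> \<bar>D x \<bullet> b0 - D p \<bullet> b0\<bar> < m"
    using assms(2) \<open>0 < m\<close> unfolding continuous_on_iff dist_real_def by metis
  obtain e2 where "0 < e2" "ball p e2 \<subseteq> U"
    using assms(1,2) open_contains_ball by blast
  define R where "R = min e1 e2 / (2 * DIM('a))"
  have "0 < R"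
    using \<open>0 < e1\<close> \<open>0 < e2\<close> by (simp add: R_def)
  have cube: "cube p R \<subseteq> ball p (min e1 e2)"
    using \<open>0 < e1\<close> \<open>0 < e2\<close> by (intro cube_subset_ball) (simp add: R_def min_def)
  moreover have "ball p (min e1 e2) \<subseteq> ball p e2"
    by (rule subset_ball) simp
  ultimately have "cube p R \<subseteq> U"
    using \<open>ball p e2 \<subseteq> U\<close> by blast
  moreover have "m \<le> \<bar>D x \<bullet> b0\<bar>" if "x \<in> cube p R" for x
  proof -
    have "dist x p < e1"
      using that cube by (auto simp: dist_commute)
    then have "\<bar>D x \<bullet> b0 - D p \<bullet> b0\<bar> < m"
      using e1 that \<open>cube p R \<subseteq> U\<close> by blast
    then show ?thesis
      unfolding m_def by arith
  qed
  moreover obtain L where "\<And>x. x \<in> cube p R \<Longrightarrow> norm (D x) \<le> L"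
    using compact_continuous_norm_le[OF compact_cbox continuous_on_subset[OF assms(3)]]
      \<open>cube p R \<subseteq> U\<close> by blast
  ultimately show ?thesis
    using that \<open>0 < R\<close> b0(1) \<open>0 < m\<close> by blast
qed

lemma chart_abs_le_dist_frontier:
  fixes \<phi> :: "'a::euclidean_space \<Rightarrow> real"
  assumes chart: "open \<Omega>" "open U" "\<Omega> \<inter> U = {x\<in>U. \<phi> x < 0}" "continuous_on U \<phi>"
    and S: "convex S" "S \<subseteq> U"
    and d: "\<And>z. z \<in> S \<Longrightarrow> (\<phi> has_derivative (\<lambda>v. D z \<bullet> v)) (at z)"
    and L: "\<And>z. z \<in> S \<Longrightarrow> norm (D z) \<le> L"
    and "x \<in> S" "q \<in> S" "q \<in> frontier \<Omega>"
  shows "\<bar>\<phi> x\<bar> \<le> L * dist x q"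
proof -
  have "\<phi> q = 0"
    using chart assms(9-11) S(2) by (intro chart_vanishes_on_frontier[of \<Omega> U]) auto
  then show ?thesis
    using lipschitz_from_gradient_bound[OF S(1) d L assms(9,10)] by (simp add: dist_norm)
qed

lemma tube_Int_cball_lmeasurable:
  "{x. infdist x A \<le> \<eta>} \<inter> cball p \<rho> \<in> lmeasurable"
  by (intro lmeasurable_compact closed_Int_compact compact_cball closed_Collect_le continuous_intros)

text \<open>Near a boundary point the tube of width \<open>\<eta>\<close> lies in the band \<open>|\<phi>| \<le> L \<eta>\<close> of a
  defining function with a partial derivative bounded away from zero.\<close>

lemma measure_tube_in_chart_cube:
  fixes \<phi> :: "'a::euclidean_space \<Rightarrow> real"
  assumes chart: "open \<Omega>" "open U" "\<Omega> \<inter> U = {x\<in>U. \<phi> x < 0}" "continuous_on U \<phi>"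
    and cube: "cube p R \<subseteq> U" "p \<in> frontier \<Omega>" "0 < R"
    and d: "\<And>x. x \<in> cube p R \<Longrightarrow> (\<phi> has_derivative (\<lambda>v. D x \<bullet> v)) (at x)"
    and L: "\<And>x. x \<in> cube p R \<Longrightarrow> norm (D x) \<le> L" "1 \<le> L"
    and m: "\<And>x. x \<in> cube p R \<Longrightarrow> m \<le> \<bar>D x \<bullet> b0\<bar>" "0 < m" "b0 \<in> Basis"
    and \<eta>: "0 < \<eta>" "\<eta> \<le> R / 2" "L * \<eta> \<le> 1"
  shows "measure lebesgue ({x. infdist x (frontier \<Omega>) \<le> \<eta>} \<inter> cball p (R / 2))
    \<le> (2 * R + 2) ^ (DIM('a) - 1) * (2 * ((L * DIM('a) + 2) / m) + 3) * (L * \<eta>)"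
proof (rule measure_thin_set)
  define A where "A = {x. infdist x (frontier \<Omega>) \<le> \<eta>} \<inter> cball p (R / 2)"
  have "A \<subseteq> cball p R"
    using cube(3) by (auto simp: A_def)
  then show "A \<subseteq> cube p R"
    using cball_subset_cube by (rule subset_trans)
  have small: "\<bar>\<phi> x\<bar> \<le> L * \<eta>" if "x \<in> A" for x
  proof -
    obtain q where q: "q \<in> frontier \<Omega>" "infdist x (frontier \<Omega>) = dist x q"
      using cube(2) infdist_attains_inf[OF frontier_closed, of \<Omega> x] by blast
    then have "dist x q \<le> \<eta>" "dist p q \<le> R"
      using that \<eta>(2) dist_triangle[of p q x] by (simp_all add: A_def)
    then have "\<bar>\<phi> x\<bar> \<le> L * dist x q"
      using q(1) that \<open>A \<subseteq> cube p R\<close> cball_subset_cube[of p R] cube(1) L(1)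
      by (intro chart_abs_le_dist_frontier[OF chart convex_box(1) _ d L(1)]) auto
    also have "\<dots> \<le> L * \<eta>"
      using \<open>dist x q \<le> \<eta>\<close> L(2) by simp
    finally show ?thesis .
  qed
  show "thin_in_direction A b0 (L * \<eta>) ((L * DIM('a) + 2) / m)"
    unfolding thin_in_direction_def using small \<open>A \<subseteq> cube p R\<close> m(2,3)
    by (intro ballI impI level_set_thin_in_direction[where \<phi>=\<phi> and D=D]) (auto intro: d L m)
qed (use tube_Int_cball_lmeasurable[THEN fmeasurableD] \<eta> cube(3) L(2) m(2,3) in auto)

lemma C2_boundary_local_tube_estimate:
  fixes \<Omega> :: "'a::euclidean_space set"
  assumes C2: "C2_boundary \<Omega>" and p: "p \<in> frontier \<Omega>"
  shows "\<exists>\<rho>>0. \<exists>C \<delta>. 0 < \<delta> \<and> (\<forall>\<eta>. 0 < \<eta> \<and> \<eta> \<le> \<delta> \<longrightarrow>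
           measure lebesgue ({x. infdist x (frontier \<Omega>) \<le> \<eta>} \<inter> cball p \<rho>) \<le> C * \<eta>)"
proof -
  obtain U \<phi> D1 D2 where U: "open U" "p \<in> U" "\<Omega> \<inter> U = {x\<in>U. \<phi> x < 0}"
    and d1: "\<And>x. x \<in> U \<Longrightarrow> (\<phi> has_derivative (\<lambda>v. D1 x \<bullet> v)) (at x)"
    and d2: "\<And>x. x \<in> U \<Longrightarrow> (D1 has_derivative blinfun_apply (D2 x)) (at x)"
    and nz: "\<And>x. x \<in> U \<Longrightarrow> D1 x \<noteq> 0"
    by (rule C2_boundaryE[OF C2 p], rule that)
  have "continuous_on U \<phi>" "continuous_on U D1"
    using d1 d2 by (meson has_derivative_continuous continuous_at_imp_continuous_on)+
  then obtain R b0 m L0 where R: "0 < R" "b0 \<in> Basis" "0 < m" "cube p R \<subseteq> U"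
    and m: "\<And>x. x \<in> cube p R \<Longrightarrow> m \<le> \<bar>D1 x \<bullet> b0\<bar>"
    and L0: "\<And>x. x \<in> cube p R \<Longrightarrow> norm (D1 x) \<le> L0"
    using nonvanishing_field_cube[OF U(1,2) \<open>continuous_on U D1\<close> nz[OF U(2)]] by metis
  define L where "L = max L0 1"
  have L: "\<And>x. x \<in> cube p R \<Longrightarrow> norm (D1 x) \<le> L" "1 \<le> L"
    using L0 by (force simp: L_def)+
  have d1_cube: "\<And>x. x \<in> cube p R \<Longrightarrow> (\<phi> has_derivative (\<lambda>v. D1 x \<bullet> v)) (at x)"
    using d1 R(4) by blast
  define C where "C = (2 * R + 2) ^ (DIM('a) - 1) * (2 * ((L * DIM('a) + 2) / m) + 3) * L"
  have "measure lebesgue ({x. infdist x (frontier \<Omega>) \<le> \<eta>} \<inter> cball p (R / 2)) \<le> C * \<eta>"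
    if "0 < \<eta>" "\<eta> \<le> min (R / 2) (1 / L)" for \<eta>
  proof -
    have "L * \<eta> \<le> 1"
      using that L(2) by (simp add: field_simps)
    with that have "measure lebesgue ({x. infdist x (frontier \<Omega>) \<le> \<eta>} \<inter> cball p (R / 2))
        \<le> (2 * R + 2) ^ (DIM('a) - 1) * (2 * ((L * DIM('a) + 2) / m) + 3) * (L * \<eta>)"
      by (intro measure_tube_in_chart_cube[OF C2_boundary_imp_open[OF C2] U(1,3)
          \<open>continuous_on U \<phi>\<close> R(4) p R(1) d1_cube L m R(3,2)]) auto
    then show ?thesis
      by (simp add: C_def mult.assoc)
  qed
  then show ?thesis
    using R(1) L(2) by (intro exI[of _ "R / 2"] exI[of _ C] exI[of _ "min (R / 2) (1 / L)"] conjI) auto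
qed

lemma tube_subset_UN_cball:
  fixes F :: "'a::euclidean_space set"
  assumes "closed F" "F \<noteq> {}" "F \<subseteq> (\<Union>p\<in>P. ball p (\<rho> p / 2))" "\<And>p. p \<in> P \<Longrightarrow> \<eta> \<le> \<rho> p / 2"
  shows "{x. infdist x F \<le> \<eta>} \<subseteq> (\<Union>p\<in>P. cball p (\<rho> p))"
proof
  fix x assume "x \<in> {x. infdist x F \<le> \<eta>}"
  moreover obtain q where "q \<in> F" "infdist x F = dist x q"
    using infdist_attains_inf[OF assms(1,2)] by blast
  moreover obtain p where "p \<in> P" "dist p q < \<rho> p / 2"
    using assms(3) \<open>q \<in> F\<close> by auto
  ultimately show "x \<in> (\<Union>p\<in>P. cball p (\<rho> p))"
    using dist_triangle[of p x q] assms(4)[of p] by (force simp: dist_commute)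
qed

lemma C2_boundary_tube_estimate:
  fixes \<Omega> :: "'a::euclidean_space set"
  assumes "bounded \<Omega>" "C2_boundary \<Omega>" "frontier \<Omega> \<noteq> {}"
  obtains C \<delta> where "0 < \<delta>"
    "\<And>\<eta>. 0 < \<eta> \<Longrightarrow> \<eta> \<le> \<delta> \<Longrightarrow> measure lebesgue {x. infdist x (frontier \<Omega>) \<le> \<eta>} \<le> C * \<eta>"
proof -
  define T where "T \<eta> = {x. infdist x (frontier \<Omega>) \<le> \<eta>}" for \<eta>
  obtain \<rho> C \<delta> where local: "\<And>p. p \<in> frontier \<Omega> \<Longrightarrow> 0 < \<rho> p \<and> 0 < \<delta> p \<and>
      (\<forall>\<eta>. 0 < \<eta> \<and> \<eta> \<le> \<delta> p \<longrightarrow> measure lebesgue (T \<eta> \<inter> cball p (\<rho> p)) \<le> C p * \<eta>)"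
    using C2_boundary_local_tube_estimate[OF assms(2)] unfolding T_def by metis
  have cover: "frontier \<Omega> \<subseteq> (\<Union>p\<in>frontier \<Omega>. ball p (\<rho> p / 2))"
    using local by force
  obtain P where P: "P \<subseteq> frontier \<Omega>" "finite P" "frontier \<Omega> \<subseteq> (\<Union>p\<in>P. ball p (\<rho> p / 2))"
    using compactE_image[OF compact_frontier_bounded[OF assms(1)] _ cover] by blast
  define \<delta>0 where "\<delta>0 = Min ((\<lambda>p. min (\<rho> p / 2) (\<delta> p)) ` P)"
  have "P \<noteq> {}"
    using P(3) assms(3) by blast
  then have "0 < \<delta>0"
    using P local by (auto simp: \<delta>0_def)
  have \<delta>0: "\<delta>0 \<le> \<rho> p / 2" "\<delta>0 \<le> \<delta> p" if "p \<in> P" for p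
    using Min_le[OF finite_imageI[OF P(2)], of "min (\<rho> p / 2) (\<delta> p)"] that by (simp_all add: \<delta>0_def)
  have "measure lebesgue (T \<eta>) \<le> (\<Sum>p\<in>P. C p) * \<eta>" if \<eta>: "0 < \<eta>" "\<eta> \<le> \<delta>0" for \<eta>
  proof -
    have "\<eta> \<le> \<rho> p / 2" if "p \<in> P" for p
      using \<delta>0(1)[OF that] \<eta>(2) by linarith
    then have "T \<eta> \<subseteq> (\<Union>p\<in>P. cball p (\<rho> p))"
      unfolding T_def by (rule tube_subset_UN_cball[OF frontier_closed assms(3) P(3)])
    then have "T \<eta> = (\<Union>p\<in>P. T \<eta> \<inter> cball p (\<rho> p))"
      by blast
    then have "measure lebesgue (T \<eta>) = measure lebesgue (\<Union>p\<in>P. T \<eta> \<inter> cball p (\<rho> p))"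
      by (rule arg_cong)
    also have "\<dots> \<le> (\<Sum>p\<in>P. measure lebesgue (T \<eta> \<inter> cball p (\<rho> p)))"
      by (rule measure_UNION_le[OF P(2)]) (simp add: T_def tube_Int_cball_lmeasurable[THEN fmeasurableD])
    also have "\<dots> \<le> (\<Sum>p\<in>P. C p * \<eta>)"
      using local P(1) \<delta>0(2) \<eta> by (intro sum_mono) (meson order_trans subsetD)
    finally show ?thesis
      by (simp add: sum_distrib_right)
  qed
  then show ?thesis
    using that \<open>0 < \<delta>0\<close> unfolding T_def by blast
qed

section \<open>The volume insertion error\<close>

lemma signed_dist_le_zero_iff:
  assumes "frontier S \<noteq> {}"
  shows "signed_dist S x \<le> 0 \<longleftrightarrow> x \<in> closure S"
proof (cases "x \<in> S")
  case True
  then show ?thesis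
    using infdist_nonneg[of x "frontier S"] closure_subset[of S] by (auto simp: signed_dist_def)
next
  case False
  then have "signed_dist S x \<le> 0 \<longleftrightarrow> x \<in> frontier S"
    using infdist_nonneg[of x "frontier S"] in_closed_iff_infdist_zero[OF frontier_closed assms]
    by (auto simp: signed_dist_def)
  also have "\<dots> \<longleftrightarrow> x \<in> closure S"
    using False closure_Un_frontier[of S] by (auto simp: frontier_def)
  finally show ?thesis .
qed

lemma abs_signed_dist: "\<bar>signed_dist S x\<bar> = infdist x (frontier S)"
  using infdist_nonneg[of x "frontier S"] by (simp add: signed_dist_def)

lemma V_exact_eq_measure_closure:
  "frontier \<Omega> \<noteq> {} \<Longrightarrow> V_exact \<Omega> = measure lebesgue (closure \<Omega>)"
  by (simp add: V_exact_def signed_dist_le_zero_iff)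

lemma measure_abs_diff_le:
  assumes "A \<in> fmeasurable M" "B \<in> fmeasurable M" "E \<in> fmeasurable M" "A - B \<subseteq> E" "B - A \<subseteq> E"
  shows "\<bar>measure M A - measure M B\<bar> \<le> measure M E"
proof -
  have "measure M A \<le> measure M (B \<union> E)" "measure M B \<le> measure M (A \<union> E)"
    using assms by (auto intro!: measure_mono_fmeasurable)
  moreover have "measure M (B \<union> E) \<le> measure M B + measure M E"
    "measure M (A \<union> E) \<le> measure M A + measure M E"
    using assms by (auto intro!: measure_Un_le)
  ultimately show ?thesis
    by linarith
qed

lemma measure_sublevel_perturbation:
  fixes f g :: "'a \<Rightarrow> real"
  assumes "{x\<in>K. g x \<le> 0} \<in> fmeasurable M" "{x\<in>K. f x \<le> 0} \<in> fmeasurable M"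
    "{x\<in>K. \<bar>f x\<bar> \<le> \<eta>} \<in> fmeasurable M"
    and close: "\<And>x. x \<in> K \<Longrightarrow> \<bar>f x - g x\<bar> \<le> \<eta>"
  shows "\<bar>measure M {x\<in>K. g x \<le> 0} - measure M {x\<in>K. f x \<le> 0}\<bar> \<le> measure M {x\<in>K. \<bar>f x\<bar> \<le> \<eta>}"
proof (rule measure_abs_diff_le[OF assms(1-3)])
  show "{x\<in>K. g x \<le> 0} - {x\<in>K. f x \<le> 0} \<subseteq> {x\<in>K. \<bar>f x\<bar> \<le> \<eta>}"
    using close by fastforce
  show "{x\<in>K. f x \<le> 0} - {x\<in>K. g x \<le> 0} \<subseteq> {x\<in>K. \<bar>f x\<bar> \<le> \<eta>}"
    using close by fastforce
qed

lemma grid_cell_Collect_closed_lmeasurable: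
  "closed {x. P x} \<Longrightarrow> {x\<in>grid_cell h k. P x} \<in> lmeasurable"
  using grid_cell_Int_closed_lmeasurable[of "{x. P x}" h k] by (simp add: Int_def)

lemma grid_cell_signed_dist_sets:
  assumes "frontier \<Omega> \<noteq> {}"
  shows "grid_cell h k \<inter> closure \<Omega> = {x\<in>grid_cell h k. signed_dist \<Omega> x \<le> 0}"
    and "grid_cell h k \<inter> {x. infdist x (frontier \<Omega>) \<le> \<eta>} = {x\<in>grid_cell h k. \<bar>signed_dist \<Omega> x\<bar> \<le> \<eta>}"
    and "{x\<in>grid_cell h k. signed_dist \<Omega> x \<le> 0} \<in> lmeasurable"
    and "{x\<in>grid_cell h k. \<bar>signed_dist \<Omega> x\<bar> \<le> \<eta>} \<in> lmeasurable"
proof -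
  have closure_eq: "{x. signed_dist \<Omega> x \<le> 0} = closure \<Omega>"
    using signed_dist_le_zero_iff[OF assms] by blast
  then show "grid_cell h k \<inter> closure \<Omega> = {x\<in>grid_cell h k. signed_dist \<Omega> x \<le> 0}"
    by blast
  show "grid_cell h k \<inter> {x. infdist x (frontier \<Omega>) \<le> \<eta>} = {x\<in>grid_cell h k. \<bar>signed_dist \<Omega> x\<bar> \<le> \<eta>}"
    by (auto simp: abs_signed_dist)
  show "{x\<in>grid_cell h k. signed_dist \<Omega> x \<le> 0} \<in> lmeasurable"
    using closure_eq by (intro grid_cell_Collect_closed_lmeasurable) simp
  show "{x\<in>grid_cell h k. \<bar>signed_dist \<Omega> x\<bar> \<le> \<eta>} \<in> lmeasurable"
    unfolding abs_signed_dist
    by (intro grid_cell_Collect_closed_lmeasurable closed_Collect_le continuous_intros)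
qed

lemma grid_cell_near_closest_point:
  fixes x z :: "'a::euclidean_space" and h :: real
  assumes "0 < h" "grid_cell h k \<inter> S \<noteq> {}"
    and "dist (cell_centroid h k) z = infdist (cell_centroid h k) S" "x \<in> grid_cell h k"
  shows "norm (x - z) \<le> 2 * (DIM('a) * h)"
proof -
  define c where "c = cell_centroid h k"
  have "c \<in> grid_cell h k"
    using cell_centroid_in_grid_cell[OF assms(1)] by (simp add: c_def)
  obtain y where "y \<in> grid_cell h k" "y \<in> S"
    using assms(2) by blast
  then have "norm (c - z) \<le> DIM('a) * h"
    using assms(3) infdist_le[of y S c] grid_cell_dist_le[of c h k y] \<open>c \<in> grid_cell h k\<close>
    by (simp add: c_def dist_norm)
  moreover have "norm (x - c) \<le> DIM('a) * h"
    using grid_cell_dist_le[OF assms(4) \<open>c \<in> grid_cell h k\<close>] .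
  ultimately show ?thesis
    using norm_triangle_ineq[of "x - c" "c - z"] by simp
qed

lemma boundary_cell_error:
  fixes \<Omega> :: "'a::euclidean_space set" and h r :: real
  assumes balls: "\<And>q. q \<in> frontier \<Omega> \<Longrightarrow> \<exists>n. touching_balls \<Omega> r q n"
    and "0 < r" "0 < h" "2 * (DIM('a) * h) \<le> r"
    and cp: "cp (cell_centroid h k) \<in> frontier \<Omega>"
      "dist (cell_centroid h k) (cp (cell_centroid h k)) = infdist (cell_centroid h k) (frontier \<Omega>)"
    and K: "grid_cell h k \<inter> frontier \<Omega> \<noteq> {}"
  shows "\<bar>elem_vol \<Omega> h cp k - measure lebesgue (grid_cell h k \<inter> closure \<Omega>)\<bar>
    \<le> measure lebesgue (grid_cell h k \<inter> {x. infdist x (frontier \<Omega>) \<le> (2 * (DIM('a) * h))^2 / r})"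
proof -
  define K where "K = grid_cell h k"
  define xp where "xp = cp (cell_centroid h k)"
  define \<eta> where "\<eta> = (2 * (DIM('a) * h))^2 / r"
  obtain n where n: "touching_balls \<Omega> r xp n"
    using balls cp(1) by (auto simp: xp_def)
  have tangent: "\<bar>signed_dist \<Omega> x - (x - xp) \<bullet> n\<bar> \<le> \<eta>" if "x \<in> K" for x
  proof -
    have near: "norm (x - xp) \<le> 2 * (DIM('a) * h)"
      using grid_cell_near_closest_point[OF assms(3) K cp(2)] that by (simp add: K_def xp_def)
    then have "\<bar>signed_dist \<Omega> x - (x - xp) \<bullet> n\<bar> \<le> norm (x - xp)^2 / r"
      using assms(2,4) cp(1) by (intro signed_dist_tangent_plane[OF n]) (auto simp: xp_def)
    also have "\<dots> \<le> \<eta>"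
      unfolding \<eta>_def using near assms(2) by (intro divide_right_mono power_mono) auto
    finally show ?thesis .
  qed
  have "frontier \<Omega> \<noteq> {}"
    using K by blast
  note sets = grid_cell_signed_dist_sets[OF this, of h k]
  have "elem_vol \<Omega> h cp k = measure lebesgue {x\<in>K. (x - xp) \<bullet> n \<le> 0}"
    using K signed_dist_touching_balls[OF n] cp(1) assms(2)
    by (simp add: elem_vol_def Let_def K_def xp_def)
  moreover have "\<bar>measure lebesgue {x\<in>K. (x - xp) \<bullet> n \<le> 0} - measure lebesgue {x\<in>K. signed_dist \<Omega> x \<le> 0}\<bar>
      \<le> measure lebesgue {x\<in>K. \<bar>signed_dist \<Omega> x\<bar> \<le> \<eta>}"
  proof (rule measure_sublevel_perturbation[OF _ sets(3,4)[folded K_def]])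
    show "{x\<in>K. (x - xp) \<bullet> n \<le> 0} \<in> lmeasurable"
      unfolding K_def by (intro grid_cell_Collect_closed_lmeasurable closed_Collect_le continuous_intros)
  qed (use tangent in \<open>simp add: abs_minus_commute\<close>)
  ultimately show ?thesis
    unfolding K_def \<eta>_def sets(1,2) by (simp add: abs_minus_commute)
qed

lemma interior_cell_exact:
  assumes "grid_cell h k \<inter> closure \<Omega> \<noteq> {}" "grid_cell h k \<inter> frontier \<Omega> = {}"
  shows "elem_vol \<Omega> h cp k = measure lebesgue (grid_cell h k \<inter> closure \<Omega>)"
proof -
  have "grid_cell h k \<inter> \<Omega> \<noteq> {}"
    using assms closure_Un_frontier[of \<Omega>] by blast
  moreover have "connected (grid_cell h k)"
    by (simp add: grid_cell_def convex_connected)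
  ultimately have "grid_cell h k \<subseteq> \<Omega>"
    using connected_Int_frontier[of "grid_cell h k" \<Omega>] assms(2) by blast
  then show ?thesis
    using assms(2) closure_subset[of \<Omega>] by (simp add: elem_vol_def Let_def Int_absorb2 subset_trans)
qed

lemma V_h_eq_sum_grid_cells:
  "V_h \<Omega> h cp = (\<Sum>k\<in>grid_cells_meeting h (closure \<Omega>). elem_vol \<Omega> h cp k)"
  by (simp add: V_h_def grid_cells_meeting_def)

lemma V_exact_eq_sum_grid_cells:
  fixes \<Omega> :: "'a::euclidean_space set"
  assumes "bounded \<Omega>" "frontier \<Omega> \<noteq> {}" "0 < h"
  shows "V_exact \<Omega> = (\<Sum>k\<in>grid_cells_meeting h (closure \<Omega>). measure lebesgue (grid_cell h k \<inter> closure \<Omega>))"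
proof -
  define I where "I = grid_cells_meeting h (closure \<Omega>)"
  have I: "finite I" "I \<subseteq> int_pts"
    using finite_grid_cells_meeting[OF bounded_closure[OF assms(1)] assms(3)]
    by (auto simp: I_def grid_cells_meeting_def)
  have "closure \<Omega> = (\<Union>k\<in>I. grid_cell h k \<inter> closure \<Omega>)"
    using mem_grid_cell_grid_index[OF assms(3)] grid_index_in_int_pts
    by (auto simp: I_def grid_cells_meeting_def)
  then have "V_exact \<Omega> = measure lebesgue (\<Union>k\<in>I. grid_cell h k \<inter> closure \<Omega>)"
    using V_exact_eq_measure_closure[OF assms(2)] by metis
  also have "\<dots> = (\<Sum>k\<in>I. measure lebesgue (grid_cell h k \<inter> closure \<Omega>))"
    by (rule measure_UN_grid_cell_Int[OF I assms(3) closed_closure])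
  finally show ?thesis
    by (simp add: I_def)
qed

lemma sum_measure_grid_cell_Int_le:
  fixes T :: "'a::euclidean_space set"
  assumes "finite I" "I \<subseteq> int_pts" "0 < h" "compact T"
  shows "(\<Sum>k\<in>I. measure lebesgue (grid_cell h k \<inter> T)) \<le> measure lebesgue T"
proof -
  have "closed T"
    using assms(4) by (rule compact_imp_closed)
  have "(\<Sum>k\<in>I. measure lebesgue (grid_cell h k \<inter> T)) = measure lebesgue (\<Union>k\<in>I. grid_cell h k \<inter> T)"
    using measure_UN_grid_cell_Int[OF assms(1-3) \<open>closed T\<close>] by simp
  also have "\<dots> \<le> measure lebesgue T"
  proof (rule measure_mono_fmeasurable)
    show "(\<Union>k\<in>I. grid_cell h k \<inter> T) \<in> sets lebesgue"
      using fmeasurable.finite_UN[OF assms(1) grid_cell_Int_closed_lmeasurable[OF \<open>closed T\<close>]]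
      by (rule fmeasurableD)
  qed (use assms(4) lmeasurable_compact in auto)
  finally show ?thesis .
qed

lemma volume_error_le_tube:
  fixes \<Omega> :: "'a::euclidean_space set" and h r :: real
  assumes "bounded \<Omega>" "frontier \<Omega> \<noteq> {}"
    and balls: "\<And>q. q \<in> frontier \<Omega> \<Longrightarrow> \<exists>n. touching_balls \<Omega> r q n"
    and "0 < r" "0 < h" "2 * (DIM('a) * h) \<le> r"
    and cp: "\<forall>x. cp x \<in> frontier \<Omega> \<and> dist x (cp x) = infdist x (frontier \<Omega>)"
  shows "\<bar>V_exact \<Omega> - V_h \<Omega> h cp\<bar> \<le> measure lebesgue {x. infdist x (frontier \<Omega>) \<le> (2 * (DIM('a) * h))^2 / r}"
proof -
  define T where "T = {x. infdist x (frontier \<Omega>) \<le> (2 * (DIM('a) * h))^2 / r}"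
  define I where "I = grid_cells_meeting h (closure \<Omega>)"
  have "\<bar>V_exact \<Omega> - V_h \<Omega> h cp\<bar>
      = \<bar>\<Sum>k\<in>I. elem_vol \<Omega> h cp k - measure lebesgue (grid_cell h k \<inter> closure \<Omega>)\<bar>"
    using V_exact_eq_sum_grid_cells[OF assms(1,2,5)] V_h_eq_sum_grid_cells[of \<Omega> h cp]
    by (simp add: I_def sum_subtractf abs_minus_commute)
  also have "\<dots> \<le> (\<Sum>k\<in>I. \<bar>elem_vol \<Omega> h cp k - measure lebesgue (grid_cell h k \<inter> closure \<Omega>)\<bar>)"
    by (rule sum_abs)
  also have "\<dots> \<le> (\<Sum>k\<in>I. measure lebesgue (grid_cell h k \<inter> T))"
  proof (rule sum_mono)
    fix k assume "k \<in> I"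
    then show "\<bar>elem_vol \<Omega> h cp k - measure lebesgue (grid_cell h k \<inter> closure \<Omega>)\<bar>
        \<le> measure lebesgue (grid_cell h k \<inter> T)"
      using boundary_cell_error[OF balls assms(4-6)] cp interior_cell_exact[of h k \<Omega> cp]
      by (cases "grid_cell h k \<inter> frontier \<Omega> = {}") (auto simp: I_def T_def grid_cells_meeting_def)
  qed
  also have "\<dots> \<le> measure lebesgue T"
    using finite_grid_cells_meeting[OF bounded_closure[OF assms(1)] assms(5)] assms(4,5)
      compact_infdist_le[OF assms(2) compact_frontier_bounded[OF assms(1)]]
    by (intro sum_measure_grid_cell_Int_le) (auto simp: I_def T_def grid_cells_meeting_def)
  finally show ?thesis
    by (simp add: T_def)
qed

lemma volume_error_quadratic:
  fixes \<Omega> :: "'a::euclidean_space set" and h r :: real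
  assumes "bounded \<Omega>" "frontier \<Omega> \<noteq> {}"
    and balls: "\<And>q. q \<in> frontier \<Omega> \<Longrightarrow> \<exists>n. touching_balls \<Omega> r q n" and "0 < r"
    and tube: "\<And>\<eta>. 0 < \<eta> \<Longrightarrow> \<eta> \<le> \<delta> \<Longrightarrow> measure lebesgue {x. infdist x (frontier \<Omega>) \<le> \<eta>} \<le> C * \<eta>"
    and h: "0 < h" "2 * (DIM('a) * h) < min r \<delta>"
    and cp: "\<forall>x. cp x \<in> frontier \<Omega> \<and> dist x (cp x) = infdist x (frontier \<Omega>)"
  shows "\<bar>V_exact \<Omega> - V_h \<Omega> h cp\<bar> \<le> C * (4 * DIM('a)^2 / r) * h^2"
proof -
  define \<eta> where "\<eta> = (2 * (DIM('a) * h))^2 / r"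
  have width: "2 * (DIM('a) * h) \<le> r"
    using h(2) by simp
  have "\<eta> = 2 * (DIM('a) * h) * (2 * (DIM('a) * h) / r)"
    by (simp add: \<eta>_def power2_eq_square)
  also have "\<dots> \<le> 2 * (DIM('a) * h) * 1"
    using width h(1) assms(4) by (intro mult_left_mono) auto
  finally have "\<eta> \<le> \<delta>"
    using h(2) by simp
  moreover have "0 < \<eta>"
    using h(1) assms(4) by (simp add: \<eta>_def)
  moreover have "\<bar>V_exact \<Omega> - V_h \<Omega> h cp\<bar> \<le> measure lebesgue {x. infdist x (frontier \<Omega>) \<le> \<eta>}"
    unfolding \<eta>_def by (rule volume_error_le_tube[OF assms(1,2) balls assms(4) h(1) width cp])
  ultimately have "\<bar>V_exact \<Omega> - V_h \<Omega> h cp\<bar> \<le> C * \<eta>"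
    using tube[of \<eta>] by linarith
  then show ?thesis
    by (simp add: \<eta>_def power_mult_distrib field_simps)
qed

text \<open>Here \<open>\<Omega> = {}\<close>, and \<open>V_exact \<Omega>\<close> is the measure of the whole space, which is \<open>0\<close>
  only as the junk value of \<^const>\<open>measure\<close> on sets of infinite measure.\<close>

lemma volumes_of_empty_frontier:
  fixes \<Omega> :: "'a::euclidean_space set"
  assumes "bounded \<Omega>" "frontier \<Omega> = {}"
  shows "V_exact \<Omega> = 0" "V_h \<Omega> h cp = 0"
proof -
  have "\<Omega> = {}"
    using assms frontier_eq_empty not_bounded_UNIV by blast
  moreover have "measure lebesgue (UNIV :: 'a set) = 0"
    by (simp add: measure_def)
  ultimately show "V_exact \<Omega> = 0" "V_h \<Omega> h cp = 0"
    by (simp_all add: V_exact_def signed_dist_def infdist_def V_h_def)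
qed

theorem theorem1:
  fixes \<Omega> :: "'a::euclidean_space set"
  assumes "bounded \<Omega>" and "C2_boundary \<Omega>"
  shows "\<exists>C h0. h0 > 0 \<and>
           (\<forall>h cp. 0 < h \<and> h < h0 \<and>
              (\<forall>x. cp x \<in> frontier \<Omega> \<and> dist x (cp x) = infdist x (frontier \<Omega>)) \<longrightarrow>
              \<bar>V_exact \<Omega> - V_h \<Omega> h cp\<bar> \<le> C * h^2)"
proof (cases "frontier \<Omega> = {}")
  case True
  then show ?thesis
    using volumes_of_empty_frontier[OF assms(1)] by (intro exI[of _ 0] exI[of _ 1]) auto
next
  case False
  obtain r where r: "0 < r" "\<And>q. q \<in> frontier \<Omega> \<Longrightarrow> \<exists>n. touching_balls \<Omega> r q n"
    using C2_boundary_uniform_touching_balls[OF assms] by blast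
  obtain C \<delta> where "0 < \<delta>" and tube:
    "\<And>\<eta>. 0 < \<eta> \<Longrightarrow> \<eta> \<le> \<delta> \<Longrightarrow> measure lebesgue {x. infdist x (frontier \<Omega>) \<le> \<eta>} \<le> C * \<eta>"
    using C2_boundary_tube_estimate[OF assms False] by blast
  have "\<bar>V_exact \<Omega> - V_h \<Omega> h cp\<bar> \<le> C * (4 * DIM('a)^2 / r) * h^2"
    if "0 < h" "h < min r \<delta> / (2 * DIM('a))"
      "\<forall>x. cp x \<in> frontier \<Omega> \<and> dist x (cp x) = infdist x (frontier \<Omega>)" for h cp
    using that by (intro volume_error_quadratic[OF assms(1) False r(2,1) tube]) (auto simp: field_simps)
  moreover have "0 < min r \<delta> / (2 * DIM('a))"
    using r(1) \<open>0 < \<delta>\<close> by simp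
  ultimately show ?thesis
    by blast
qed

end
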